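(* Let $(\mathcal M,X,\bot)$ be a concurrent system with characteristic root $r$, and let $\rho$ be the spectral radius of its ADSC. Then $r=1/\rho$ if $\rho\neq0$, and $r=+\infty$ if $\rho=0$.
   Context: A trace monoid $\mathcal M=\mathcal M(\Sigma,I)$ is $\langle\Sigma\mid ab=ba\ ((a,b)\in I)\rangle$, $\Sigma$ finite, $I$ irreflexive symmetric; $|x|$ is length. A clique is a trace of pairwise distinct letters pairwise in $I$; $\mathfrak C$ is the set of nonempty cliques; for $c,c'\in\mathfrak C$, $c\to c'$ means every letter of $c'$ is in relation $(\Sigma\times\Sigma)\setminus I$ with some letter of $c$. A concurrent system $(\mathcal M,X,\bot)$: $X$ finite, $\bot\notin X$, right action of $\mathcal M$ on $X\cup\{\bot\}$ with $\bot\cdot x=\bot$. The characteristic root $r\in(0,+\infty]$ is the minimum over $\alpha,\beta\in X$ of the radius of convergence of $\sum_n\#\{x:|x|=n,\ \alpha\cdot x=\beta\}z^n$. $\mathfrak C_\alpha=\{c\in\mathfrak C:\alpha\cdot c\ne\bot\}$. DSC: nodes $(\alpha,c)$, $c\in\mathfrak C_\alpha$, arc $(\alpha,c)\to(\beta,d)$ iff $\beta=\alpha\cdot c$ and $c\to d$. ADSC: nodes $(\alpha,c,i)$ with $(\alpha,c)$ a DSC node and $1\le i\le|c|$; arcs $(\alpha,c,i)\to(\alpha,c,i+1)$, and $(\alpha,c,|c|)\to(\beta,d,1)$ whenever $(\alpha,c)\to(\beta,d)$ in DSC. The spectral radius of a digraph is the spectral radius of its $\{0,1\}$ adjacency matrix.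 *)

theory Defs
  imports "HOL-Analysis.Analysis" "Jordan_Normal_Form.Spectral_Radius"
begin

text \<open>The trace monoid M(Sg, I) is represented by words over Sg modulo the
  congruence generated by ab = ba for (a,b) in I, i.e. the reflexive transitive
  closure of swapping two adjacent independent letters.\<close>

definition trace_swap :: "('a \<times> 'a) set \<Rightarrow> ('a list \<times> 'a list) set" where
  "trace_swap I = {(u @ [a, b] @ v, u @ [b, a] @ v) | u v a b. (a, b) \<in> I}"

definition trace_eq :: "('a \<times> 'a) set \<Rightarrow> ('a list \<times> 'a list) set" where
  "trace_eq I = (trace_swap I)\<^sup>*"

definition trace_monoid_data :: "'a set \<Rightarrow> ('a \<times> 'a) set \<Rightarrow> bool" where
  "trace_monoid_data Sg I \<longleftrightarrow> finite Sg \<and> I \<subseteq> Sg \<times> Sg \<and> irrefl I \<and> sym I"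

text \<open>States X with an extra sink state bot, encoded as the option type:
  Some x for x in X, None for bot.\<close>

definition act :: "('s option \<Rightarrow> 'a \<Rightarrow> 's option) \<Rightarrow> 's option \<Rightarrow> 'a list \<Rightarrow> 's option" where
  "act delta s w = foldl delta s w"

definition concurrent_system ::
  "'a set \<Rightarrow> ('a \<times> 'a) set \<Rightarrow> 's set \<Rightarrow> ('s option \<Rightarrow> 'a \<Rightarrow> 's option) \<Rightarrow> bool" where
  "concurrent_system Sg I X delta \<longleftrightarrow>
     trace_monoid_data Sg I \<and> finite X \<and>
     (\<forall>a \<in> Sg. delta None a = None) \<and>
     (\<forall>x \<in> X. \<forall>a \<in> Sg. delta (Some x) a \<in> insert None (Some ` X)) \<and>
     (\<forall>s \<in> insert None (Some ` X). \<forall>u \<in> lists Sg. \<forall>v \<in> lists Sg.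
        (u, v) \<in> trace_eq I \<longrightarrow> act delta s u = act delta s v)"

definition trace_count ::
  "'a set \<Rightarrow> ('a \<times> 'a) set \<Rightarrow> ('s option \<Rightarrow> 'a \<Rightarrow> 's option) \<Rightarrow> 's \<Rightarrow> 's \<Rightarrow> nat \<Rightarrow> nat" where
  "trace_count Sg I delta \<alpha> \<beta> n =
     card ({w \<in> lists Sg. length w = n \<and> act delta (Some \<alpha>) w = Some \<beta>} // trace_eq I)"

definition characteristic_root ::
  "'a set \<Rightarrow> ('a \<times> 'a) set \<Rightarrow> 's set \<Rightarrow> ('s option \<Rightarrow> 'a \<Rightarrow> 's option) \<Rightarrow> ereal" where
  "characteristic_root Sg I X delta =
     (INF \<alpha>\<in>X. INF \<beta>\<in>X. conv_radius (\<lambda>n. real (trace_count Sg I delta \<alpha> \<beta> n)))"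

text \<open>A clique (a trace of pairwise distinct, pairwise independent letters) is
  represented by its set of letters; its length is the cardinality.\<close>

definition is_clique :: "'a set \<Rightarrow> ('a \<times> 'a) set \<Rightarrow> 'a set \<Rightarrow> bool" where
  "is_clique Sg I c \<longleftrightarrow> c \<noteq> {} \<and> c \<subseteq> Sg \<and> (\<forall>a\<in>c. \<forall>b\<in>c. a \<noteq> b \<longrightarrow> (a, b) \<in> I)"

definition clique_word :: "'a set \<Rightarrow> 'a list" where
  "clique_word c = (SOME w. distinct w \<and> set w = c)"

definition act_clique :: "('s option \<Rightarrow> 'a \<Rightarrow> 's option) \<Rightarrow> 's option \<Rightarrow> 'a set \<Rightarrow> 's option" where
  "act_clique delta s c = act delta s (clique_word c)"

definition clique_arrow :: "'a set \<Rightarrow> ('a \<times> 'a) set \<Rightarrow> 'a set \<Rightarrow> 'a set \<Rightarrow> bool" where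
  "clique_arrow Sg I c c' \<longleftrightarrow> (\<forall>b\<in>c'. \<exists>a\<in>c. (a, b) \<in> (Sg \<times> Sg) - I)"

definition DSC_nodes ::
  "'a set \<Rightarrow> ('a \<times> 'a) set \<Rightarrow> 's set \<Rightarrow> ('s option \<Rightarrow> 'a \<Rightarrow> 's option) \<Rightarrow> ('s \<times> 'a set) set" where
  "DSC_nodes Sg I X delta =
     {(\<alpha>, c). \<alpha> \<in> X \<and> is_clique Sg I c \<and> act_clique delta (Some \<alpha>) c \<noteq> None}"

definition DSC_arc ::
  "'a set \<Rightarrow> ('a \<times> 'a) set \<Rightarrow> 's set \<Rightarrow> ('s option \<Rightarrow> 'a \<Rightarrow> 's option) \<Rightarrow>
   ('s \<times> 'a set) \<Rightarrow> ('s \<times> 'a set) \<Rightarrow> bool" where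
  "DSC_arc Sg I X delta p q \<longleftrightarrow>
     p \<in> DSC_nodes Sg I X delta \<and> q \<in> DSC_nodes Sg I X delta \<and>
     act_clique delta (Some (fst p)) (snd p) = Some (fst q) \<and>
     clique_arrow Sg I (snd p) (snd q)"

definition ADSC_nodes ::
  "'a set \<Rightarrow> ('a \<times> 'a) set \<Rightarrow> 's set \<Rightarrow> ('s option \<Rightarrow> 'a \<Rightarrow> 's option) \<Rightarrow> ('s \<times> 'a set \<times> nat) set" where
  "ADSC_nodes Sg I X delta =
     {(\<alpha>, c, i). (\<alpha>, c) \<in> DSC_nodes Sg I X delta \<and> 1 \<le> i \<and> i \<le> card c}"

definition ADSC_arc ::
  "'a set \<Rightarrow> ('a \<times> 'a) set \<Rightarrow> 's set \<Rightarrow> ('s option \<Rightarrow> 'a \<Rightarrow> 's option) \<Rightarrow>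
   ('s \<times> 'a set \<times> nat) \<Rightarrow> ('s \<times> 'a set \<times> nat) \<Rightarrow> bool" where
  "ADSC_arc Sg I X delta p q \<longleftrightarrow>
     (case p of (\<alpha>, c, i) \<Rightarrow> case q of (\<beta>, d, j) \<Rightarrow>
       p \<in> ADSC_nodes Sg I X delta \<and> q \<in> ADSC_nodes Sg I X delta \<and>
       ((\<beta> = \<alpha> \<and> d = c \<and> j = i + 1) \<or>
        (i = card c \<and> j = 1 \<and> DSC_arc Sg I X delta (\<alpha>, c) (\<beta>, d))))"

text \<open>Adjacency matrix w.r.t. an arbitrary enumeration of the vertices (the spectrum
  does not depend on it); the spectral radius of the empty digraph is 0.\<close>

definition vertex_list :: "'v set \<Rightarrow> 'v list" where
  "vertex_list V = (SOME xs. distinct xs \<and> set xs = V)"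

definition adjacency_mat :: "'v set \<Rightarrow> ('v \<Rightarrow> 'v \<Rightarrow> bool) \<Rightarrow> complex mat" where
  "adjacency_mat V E = (let vs = vertex_list V in
     mat (length vs) (length vs) (\<lambda>(i, j). if E (vs ! i) (vs ! j) then 1 else 0))"

definition digraph_spectral_radius :: "'v set \<Rightarrow> ('v \<Rightarrow> 'v \<Rightarrow> bool) \<Rightarrow> real" where
  "digraph_spectral_radius V E = (if V = {} then 0 else spectral_radius (adjacency_mat V E))"

end

(* Every trace has a unique Cartier-Foata normal form c_1 c_2 ... c_k: a sequence of nonempty
   cliques with c_i -> c_(i+1).  Acting by it from a state alpha runs through DSC nodes
   (alpha_i, c_i), and unrolling each clique into its letters gives an ADSC walk of the same
   length.  So the number of traces of length n leading from alpha to beta is at most the number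
   w_n of ADSC walks of length n.  Conversely every ADSC walk extends, by at most |Sigma| nodes at
   either end, to a walk reading a whole normal form, and such walks are determined by their
   initial state and their trace; so w_m is bounded by a constant times finitely many shifted
   trace counts.  Hence the characteristic root is the radius of convergence of sum w_n z^n, and
   this radius is 1/rho because rho^k <= w_(k+1) <= C t^k for every t > rho, the upper bound
   coming from the Jordan normal form of the adjacency matrix. *)

theory Submission
  imports Defs
begin

section \<open>Trace equivalence\<close>

lemma trace_eq_refl [simp]: "(u, u) \<in> trace_eq I"
  unfolding trace_eq_def by simp

lemma trace_eq_trans: "(u, v) \<in> trace_eq I \<Longrightarrow> (v, w) \<in> trace_eq I \<Longrightarrow> (u, w) \<in> trace_eq I"
  unfolding trace_eq_def by simp

lemma sym_trace_eq:
  assumes "sym I" shows "sym (trace_eq I)"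
proof -
  have "sym (trace_swap I)" using assms unfolding trace_swap_def sym_def by blast
  then show ?thesis unfolding trace_eq_def by (rule sym_rtrancl)
qed

lemma trace_eq_sym: "sym I \<Longrightarrow> (u, v) \<in> trace_eq I \<Longrightarrow> (v, u) \<in> trace_eq I"
  using sym_trace_eq by (blast dest: symD)

lemma equiv_trace_eq:
  assumes "sym I" shows "equiv UNIV (trace_eq I)"
  unfolding trace_eq_def
  by (rule equivI[OF _ refl_rtrancl sym_trace_eq[OF assms, unfolded trace_eq_def] trans_rtrancl]) simp

lemma trace_eq_append:
  assumes "(u, v) \<in> trace_eq I" shows "(p @ u @ q, p @ v @ q) \<in> trace_eq I"
proof -
  have swap: "(p @ x @ q, p @ y @ q) \<in> trace_swap I" if "(x, y) \<in> trace_swap I" for x y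
  proof -
    from that obtain x1 x2 a b where "x = x1 @ [a, b] @ x2" "y = x1 @ [b, a] @ x2" "(a, b) \<in> I"
      unfolding trace_swap_def by blast
    then show ?thesis unfolding trace_swap_def
      by (intro CollectI exI[of _ "p @ x1"] exI[of _ "x2 @ q"]) auto
  qed
  from assms[unfolded trace_eq_def] show ?thesis unfolding trace_eq_def
    by (induction rule: rtrancl_induct) (auto intro: rtrancl_into_rtrancl swap)
qed

lemma trace_eq_append_left: "(u, v) \<in> trace_eq I \<Longrightarrow> (p @ u, p @ v) \<in> trace_eq I"
  using trace_eq_append[of u v I p "[]"] by simp

lemma trace_eq_append_right: "(u, v) \<in> trace_eq I \<Longrightarrow> (u @ q, v @ q) \<in> trace_eq I"
  using trace_eq_append[of u v I "[]" q] by simp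

lemma trace_eq_length: "(u, v) \<in> trace_eq I \<Longrightarrow> length u = length v"
  unfolding trace_eq_def by (induction rule: rtrancl_induct) (auto simp: trace_swap_def)

lemma trace_eq_swap: "(a, b) \<in> I \<Longrightarrow> (a # b # w, b # a # w) \<in> trace_eq I"
  unfolding trace_eq_def trace_swap_def
  by (intro r_into_rtrancl CollectI exI[of _ "[]"] exI[of _ w]) auto

lemma trace_eq_commute_snoc:
  assumes "sym I" "\<forall>b\<in>set u. (a, b) \<in> I"
  shows "(u @ [a], a # u) \<in> trace_eq I"
  using assms(2)
proof (induction u)
  case (Cons b u)
  have "(b # u @ [a], b # a # u) \<in> trace_eq I"
    using trace_eq_append_left[OF Cons.IH, of "[b]"] Cons.prems by simp
  moreover have "(b # a # u, a # b # u) \<in> trace_eq I"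
    using Cons.prems assms(1) by (intro trace_eq_swap) (auto dest: symD)
  ultimately show ?case by (auto intro: trace_eq_trans)
qed simp

lemma trace_eq_clique_perm:
  assumes "sym I" "distinct u" "distinct v" "set u = set v"
    "\<forall>x\<in>set u. \<forall>y\<in>set u. x \<noteq> y \<longrightarrow> (x, y) \<in> I"
  shows "(u, v) \<in> trace_eq I"
  using assms(2-)
proof (induction v arbitrary: u)
  case (Cons b v)
  then have "b \<in> set u" by simp
  then obtain u1 u2 where u: "u = u1 @ b # u2" by (meson split_list)
  have "(u1 @ [b], b # u1) \<in> trace_eq I"
    using Cons.prems u by (intro trace_eq_commute_snoc[OF assms(1)]) auto
  then have "(u, b # u1 @ u2) \<in> trace_eq I"
    using trace_eq_append_right[of "u1 @ [b]" "b # u1" I u2] u by simp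
  moreover have "(u1 @ u2, v) \<in> trace_eq I"
  proof (rule Cons.IH)
    show "set (u1 @ u2) = set v" using Cons.prems(1-3) u by auto
    show "\<forall>x\<in>set (u1 @ u2). \<forall>y\<in>set (u1 @ u2). x \<noteq> y \<longrightarrow> (x, y) \<in> I"
      using Cons.prems(4) u by simp
  qed (use Cons.prems u in auto)
  ultimately show ?case using trace_eq_append_left[of _ _ I "[b]"] by (auto intro: trace_eq_trans)
qed simp

definition proj_pair :: "'a \<Rightarrow> 'a \<Rightarrow> 'a list \<Rightarrow> 'a list" where
  "proj_pair a b = filter (\<lambda>x. x = a \<or> x = b)"

lemma proj_pair_Nil [simp]: "proj_pair a b [] = []"
  by (simp add: proj_pair_def)

lemma proj_pair_append [simp]: "proj_pair a b (u @ v) = proj_pair a b u @ proj_pair a b v"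
  by (simp add: proj_pair_def)

lemma set_proj_pair [simp]: "set (proj_pair a b u) = set u \<inter> {a, b}"
  by (auto simp: proj_pair_def)

lemma proj_pair_self_eq_Nil_iff: "proj_pair a a w = [] \<longleftrightarrow> a \<notin> set w"
  by (auto simp: proj_pair_def filter_empty_conv)

lemma proj_pair_trace_eq:
  assumes "sym I" "irrefl I" "(a, b) \<notin> I" "(u, v) \<in> trace_eq I"
  shows "proj_pair a b u = proj_pair a b v"
  using assms(4) unfolding trace_eq_def
proof (induction rule: rtrancl_induct)
  case (step y z)
  from step(2) obtain y1 y2 x x' where "y = y1 @ [x, x'] @ y2" "z = y1 @ [x', x] @ y2"
    and "(x, x') \<in> I" unfolding trace_swap_def by blast
  moreover from \<open>(x, x') \<in> I\<close> have "\<not> ((x = a \<or> x = b) \<and> (x' = a \<or> x' = b))"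
    using assms(1-3) by (auto simp: irrefl_def dest: symD)
  ultimately show ?case using step(3) by (auto simp: proj_pair_def)
qed simp

lemma clique_word:
  assumes "finite c" shows "distinct (clique_word c)" "set (clique_word c) = c"
proof -
  obtain xs where "set xs = c" "distinct xs" using finite_distinct_list[OF assms] by blast
  then have "distinct (clique_word c) \<and> set (clique_word c) = c"
    unfolding clique_word_def by (metis (mono_tags, lifting) someI)
  then show "distinct (clique_word c)" "set (clique_word c) = c" by auto
qed

lemma length_clique_word: "finite c \<Longrightarrow> length (clique_word c) = card c"
  using clique_word distinct_card by metis

lemma clique_word_singleton [simp]: "clique_word {a} = [a]"
  using clique_word[of "{a}"] by (cases "clique_word {a}" rule: remdups_adj.cases) auto

lemma hd_proj_pair_clique_word_append:
  assumes "finite c" "c \<inter> {a, b} = {x}"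
  shows "hd (proj_pair a b (clique_word c @ w)) = x"
proof -
  have "proj_pair a b (clique_word c) \<noteq> []" "set (proj_pair a b (clique_word c)) = {x}"
    using assms clique_word(2)[OF assms(1)] by (auto simp: proj_pair_def filter_empty_conv)
  then show ?thesis using hd_in_set by fastforce
qed

lemma act_append: "act delta s (u @ v) = act delta (act delta s u) v"
  by (simp add: act_def)

abbreviation cf_word :: "'a set list \<Rightarrow> 'a list" where
  "cf_word cs \<equiv> concat (map clique_word cs)"

fun insert_hd_clique :: "'a \<Rightarrow> 'a set list \<Rightarrow> 'a set list" where
  "insert_hd_clique a [] = [{a}]"
| "insert_hd_clique a (d # q) = insert a d # q"

lemma insert_hd_clique_ne_Nil: "insert_hd_clique a q \<noteq> []"
  by (cases q) auto

lemma successively_append_hd: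
  "ys \<noteq> [] \<Longrightarrow> successively P (xs @ [hd ys]) \<Longrightarrow> successively P ys \<Longrightarrow> successively P (xs @ ys)"
  by (cases ys) (auto simp: successively_append_iff)

lemma successively_append_last:
  "ys \<noteq> [] \<Longrightarrow> successively P ys \<Longrightarrow> successively P (last ys # zs) \<Longrightarrow> successively P (ys @ zs)"
  by (cases zs) (auto simp: successively_append_iff)

section \<open>Spectral radius and walks in finite digraphs\<close>

lemma smult_pow_mat:
  fixes B :: "'b :: comm_ring_1 mat"
  assumes B: "B \<in> carrier_mat n n"
  shows "(c \<cdot>\<^sub>m B) ^\<^sub>m k = c ^ k \<cdot>\<^sub>m (B ^\<^sub>m k)"
proof (induction k)
  case 0
  show ?case using B by (intro eq_matI) auto
next
  case (Suc k)
  have Bk: "B ^\<^sub>m k \<in> carrier_mat n n" using pow_carrier_mat[OF B] .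
  have "(c \<cdot>\<^sub>m B) ^\<^sub>m Suc k = (c ^ k \<cdot>\<^sub>m (B ^\<^sub>m k)) * (c \<cdot>\<^sub>m B)" using Suc by simp
  also have "\<dots> = c ^ k \<cdot>\<^sub>m ((B ^\<^sub>m k) * (c \<cdot>\<^sub>m B))"
    using Bk B by (intro mult_smult_assoc_mat) auto
  also have "(B ^\<^sub>m k) * (c \<cdot>\<^sub>m B) = c \<cdot>\<^sub>m (B ^\<^sub>m k * B)"
    using Bk B by (intro mult_smult_distrib) auto
  also have "c ^ k \<cdot>\<^sub>m (c \<cdot>\<^sub>m (B ^\<^sub>m k * B)) = c ^ Suc k \<cdot>\<^sub>m (B ^\<^sub>m Suc k)"
    by (intro eq_matI) (auto simp: mult.assoc mult.commute mult.left_commute)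
  finally show ?case .
qed

lemma eigenvector_smult_mat:
  assumes A: "A \<in> carrier_mat n n" and v: "eigenvector A v \<mu>"
  shows "eigenvector (c \<cdot>\<^sub>m A) v (c * \<mu>)"
proof -
  have v: "v \<in> carrier_vec n" "v \<noteq> 0\<^sub>v n" "A *\<^sub>v v = \<mu> \<cdot>\<^sub>v v"
    using A v unfolding eigenvector_def by auto
  have "(c \<cdot>\<^sub>m A) *\<^sub>v v = c \<cdot>\<^sub>v (A *\<^sub>v v)"
    using A v(1) by (intro eq_vecI) auto
  then show ?thesis using A v unfolding eigenvector_def by (simp add: smult_smult_assoc)
qed

lemma spectral_radius_nonneg:
  assumes "A \<in> carrier_mat n n" "0 < n" shows "0 \<le> spectral_radius A"
proof -
  have "spectral_radius A \<in> norm ` spectrum A" using spectral_radius_mem_max(1)[OF assms] .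
  then show ?thesis by auto
qed

lemma spectral_radius_smult_mat_le:
  assumes A: "A \<in> carrier_mat n n" and n: "0 < n" and c: "c \<noteq> 0"
  shows "spectral_radius (c \<cdot>\<^sub>m A) \<le> norm c * spectral_radius A"
proof -
  have cA: "c \<cdot>\<^sub>m A \<in> carrier_mat n n" using A by simp
  obtain \<mu> v where \<mu>: "spectral_radius (c \<cdot>\<^sub>m A) = norm \<mu>" and v: "eigenvector (c \<cdot>\<^sub>m A) v \<mu>"
    using spectral_radius_mem_max(1)[OF cA n] unfolding spectrum_def eigenvalue_def by auto
  have "inverse c \<cdot>\<^sub>m (c \<cdot>\<^sub>m A) = A"
    using c by (intro eq_matI) auto
  then have "eigenvector A v (inverse c * \<mu>)"
    using eigenvector_smult_mat[OF cA v, of "inverse c"] by simp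
  then have "norm (inverse c * \<mu>) \<le> spectral_radius A"
    using spectral_radius_mem_max(2)[OF A n] unfolding spectrum_def eigenvalue_def by blast
  then have "norm c * norm (inverse c * \<mu>) \<le> norm c * spectral_radius A"
    by (rule mult_left_mono) simp
  moreover have "norm c * norm (inverse c * \<mu>) = norm \<mu>"
    using c by (simp add: norm_mult norm_inverse)
  ultimately show ?thesis using \<mu> by simp
qed

text \<open>Rescaling by 1/t brings the spectral radius below 1, where the Jordan normal form bounds
  all powers.\<close>

lemma norm_bound_pow_mat_if_spectral_radius_less:
  assumes A: "A \<in> carrier_mat n n" and n: "0 < n" and t: "spectral_radius A < t"
  shows "\<exists>C. \<forall>k. norm_bound (A ^\<^sub>m k) (C * t ^ k)"
proof -
  have t0: "0 < t" using spectral_radius_nonneg[OF A n] t by linarith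
  define c where "c = complex_of_real (1 / t)"
  have nc: "norm c = 1 / t" using t0 by (simp add: c_def norm_divide)
  have cA: "c \<cdot>\<^sub>m A \<in> carrier_mat n n" using A by simp
  have "spectral_radius (c \<cdot>\<^sub>m A) \<le> 1 / t * spectral_radius A"
    using spectral_radius_smult_mat_le[OF A n, of c] t0 nc by (simp add: c_def)
  also have "\<dots> < 1" using t t0 by (simp add: field_simps)
  finally obtain C where C: "\<And>k. norm_bound ((c \<cdot>\<^sub>m A) ^\<^sub>m k) C"
    using spectral_radius_jnf_norm_bound_less_1_upper_triangular[OF cA] by blast
  have "norm_bound (A ^\<^sub>m k) (C * t ^ k)" for k
  proof
    fix i j assume ij: "i < dim_row (A ^\<^sub>m k)" "j < dim_col (A ^\<^sub>m k)"
    have "(c \<cdot>\<^sub>m A) ^\<^sub>m k = c ^ k \<cdot>\<^sub>m (A ^\<^sub>m k)" by (rule smult_pow_mat[OF A])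
    then have "norm (c ^ k * (A ^\<^sub>m k) $$ (i, j)) \<le> C"
      using C[of k] ij unfolding norm_bound_def by (metis index_smult_mat(1-3))
    then have "(1 / t) ^ k * norm ((A ^\<^sub>m k) $$ (i, j)) \<le> C"
      by (simp add: norm_mult norm_power nc)
    then show "norm ((A ^\<^sub>m k) $$ (i, j)) \<le> C * t ^ k"
      using t0 by (simp add: field_simps)
  qed
  then show ?thesis by blast
qed

lemma eigenvalue_norm_le_sum_norm:
  fixes A :: "'a :: real_normed_field mat"
  assumes A: "A \<in> carrier_mat n n" and ev: "eigenvalue A \<mu>"
  shows "norm \<mu> \<le> (\<Sum>i<n. \<Sum>j<n. norm (A $$ (i, j)))"
proof -
  obtain v where v: "v \<in> carrier_vec n" "v \<noteq> 0\<^sub>v n" "A *\<^sub>v v = \<mu> \<cdot>\<^sub>v v"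
    using ev A unfolding eigenvalue_def eigenvector_def by auto
  have "n \<noteq> 0" using eigenvalue_imp_nonzero_dim[OF A ev] by simp
  define M where "M = Max ((\<lambda>j. norm (v $ j)) ` {..<n})"
  have M_ge: "norm (v $ j) \<le> M" if "j < n" for j unfolding M_def using that by (intro Max_ge) auto
  have "M \<in> (\<lambda>j. norm (v $ j)) ` {..<n}" unfolding M_def using \<open>n \<noteq> 0\<close> by (intro Max_in) auto
  then obtain i where i: "i < n" "norm (v $ i) = M" by auto
  have "0 < M"
  proof (rule ccontr)
    assume "\<not> 0 < M"
    have "v $ j = 0" if "j < n" for j
    proof -
      have "norm (v $ j) \<le> 0" using M_ge[OF that] \<open>\<not> 0 < M\<close> by linarith
      then show ?thesis by simp
    qed
    then have "v = 0\<^sub>v n" using v(1) by (intro eq_vecI) simp_all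
    then show False using v(2) by contradiction
  qed
  have "(A *\<^sub>v v) $ i = (\<Sum>j<n. A $$ (i, j) * v $ j)"
    using A v(1) i(1) by (simp add: scalar_prod_def atLeast0LessThan)
  moreover have "(A *\<^sub>v v) $ i = \<mu> * v $ i"
    using v(1,3) i(1) by simp
  ultimately have "\<mu> * v $ i = (\<Sum>j<n. A $$ (i, j) * v $ j)" by simp
  have "norm \<mu> * M = norm (\<mu> * v $ i)" using i(2) by (simp add: norm_mult)
  also have "\<dots> = norm (\<Sum>j<n. A $$ (i, j) * v $ j)" using \<open>\<mu> * v $ i = _\<close> by simp
  also have "\<dots> \<le> (\<Sum>j<n. norm (A $$ (i, j)) * norm (v $ j))"
    by (rule order_trans[OF norm_sum]) (simp add: norm_mult)
  also have "\<dots> \<le> (\<Sum>j<n. norm (A $$ (i, j)) * M)"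
    using M_ge by (intro sum_mono mult_left_mono) simp_all
  also have "\<dots> = (\<Sum>j<n. norm (A $$ (i, j))) * M" by (simp add: sum_distrib_right)
  finally have "norm \<mu> \<le> (\<Sum>j<n. norm (A $$ (i, j)))" using \<open>0 < M\<close> by simp
  also have "\<dots> \<le> (\<Sum>i<n. \<Sum>j<n. norm (A $$ (i, j)))"
    using i(1) by (intro member_le_sum) (simp_all add: sum_nonneg)
  finally show ?thesis .
qed

lemma spectral_radius_pow_le_sum_norm:
  assumes A: "A \<in> carrier_mat n n" and n: "0 < n"
  shows "spectral_radius A ^ k \<le> (\<Sum>i<n. \<Sum>j<n. norm ((A ^\<^sub>m k) $$ (i, j)))"
proof -
  obtain \<mu> v where \<mu>: "spectral_radius A = norm \<mu>" and v: "eigenvector A v \<mu>"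
    using spectral_radius_mem_max(1)[OF A n] unfolding spectrum_def eigenvalue_def by auto
  have "eigenvector (A ^\<^sub>m k) v (\<mu> ^ k)"
    using v eigenvector_pow[OF A v] A unfolding eigenvector_def by simp
  then have "norm (\<mu> ^ k) \<le> (\<Sum>i<n. \<Sum>j<n. norm ((A ^\<^sub>m k) $$ (i, j)))"
    using pow_carrier_mat[OF A] by (intro eigenvalue_norm_le_sum_norm) (auto simp: eigenvalue_def)
  then show ?thesis using \<mu> by (simp add: norm_power)
qed

definition digraph_walks :: "'v set \<Rightarrow> ('v \<Rightarrow> 'v \<Rightarrow> bool) \<Rightarrow> nat \<Rightarrow> 'v list set" where
  "digraph_walks V E m = {p. length p = m \<and> set p \<subseteq> V \<and> successively E p}"

definition digraph_walks_between ::
  "'v set \<Rightarrow> ('v \<Rightarrow> 'v \<Rightarrow> bool) \<Rightarrow> nat \<Rightarrow> 'v \<Rightarrow> 'v \<Rightarrow> 'v list set" where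
  "digraph_walks_between V E m x y = {p \<in> digraph_walks V E m. hd p = x \<and> last p = y}"

lemma finite_digraph_walks: "finite V \<Longrightarrow> finite (digraph_walks V E m)"
  unfolding digraph_walks_def
  by (rule finite_subset[OF _ finite_lists_length_eq[of V m]]) auto

lemma digraph_walks_Suc_empty: "digraph_walks {} E (Suc m) = {}"
proof -
  have "p \<notin> digraph_walks {} E (Suc m)" for p
  proof
    assume "p \<in> digraph_walks {} E (Suc m)"
    then have "p \<noteq> []" "set p \<subseteq> {}" unfolding digraph_walks_def by auto
    then show False by simp
  qed
  then show ?thesis by blast
qed

lemma finite_digraph_walks_between: "finite V \<Longrightarrow> finite (digraph_walks_between V E m x y)"
  unfolding digraph_walks_between_def by (simp add: finite_digraph_walks)

lemma digraph_walks_Suc_0: "digraph_walks V E (Suc 0) = (\<lambda>z. [z]) ` V"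
  unfolding digraph_walks_def by (auto simp: length_Suc_conv)

lemma card_digraph_walks_between_Suc_0:
  assumes "x \<in> V" "y \<in> V"
  shows "card (digraph_walks_between V E (Suc 0) x y) = (if x = y then 1 else 0)"
proof -
  have "digraph_walks_between V E (Suc 0) x y = (if x = y then {[x]} else {})"
    unfolding digraph_walks_between_def digraph_walks_Suc_0 using assms by auto
  then show ?thesis by simp
qed

lemma digraph_walks_between_Suc_Suc:
  assumes "y \<in> V"
  shows "digraph_walks_between V E (Suc (Suc k)) x y =
    (\<Union>z\<in>{z \<in> V. E z y}. (\<lambda>p. p @ [y]) ` digraph_walks_between V E (Suc k) x z)"
proof (rule Set.set_eqI, rule iffI)
  fix p assume "p \<in> digraph_walks_between V E (Suc (Suc k)) x y"
  then have p: "length p = Suc (Suc k)" "set p \<subseteq> V" "successively E p" "hd p = x" "last p = y"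
    unfolding digraph_walks_between_def digraph_walks_def by auto
  define q where "q = butlast p"
  have pq: "p = q @ [y]" and q: "q \<noteq> []"
    using p(1,5) unfolding q_def by (metis append_butlast_last_id list.size(3) nat.distinct(1),
      metis length_butlast diff_Suc_1 length_0_conv nat.distinct(1))
  then have "successively E q" "E (last q) y" "hd q = x" "set q \<subseteq> V"
    using p(2-4) by (auto simp: successively_append_iff)
  moreover have "last q \<in> V" using \<open>set q \<subseteq> V\<close> q by auto
  ultimately have "q \<in> digraph_walks_between V E (Suc k) x (last q)" "last q \<in> {z \<in> V. E z y}"
    using p(1) pq unfolding digraph_walks_between_def digraph_walks_def by auto
  then show "p \<in> (\<Union>z\<in>{z \<in> V. E z y}. (\<lambda>p. p @ [y]) ` digraph_walks_between V E (Suc k) x z)"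
    using pq by blast
next
  fix p assume "p \<in> (\<Union>z\<in>{z \<in> V. E z y}. (\<lambda>p. p @ [y]) ` digraph_walks_between V E (Suc k) x z)"
  then obtain z q where "z \<in> V" "E z y" "p = q @ [y]" "q \<in> digraph_walks_between V E (Suc k) x z"
    by blast
  moreover from this have "q \<noteq> []" unfolding digraph_walks_between_def digraph_walks_def by auto
  ultimately show "p \<in> digraph_walks_between V E (Suc (Suc k)) x y"
    using assms unfolding digraph_walks_between_def digraph_walks_def
    by (auto simp: successively_append_iff)
qed

lemma card_digraph_walks_between_Suc_Suc:
  assumes "finite V" "y \<in> V"
  shows "card (digraph_walks_between V E (Suc (Suc k)) x y) =
    (\<Sum>z\<in>V. if E z y then card (digraph_walks_between V E (Suc k) x z) else 0)"
proof -
  have fin: "finite ((\<lambda>p. p @ [y]) ` digraph_walks_between V E (Suc k) x z)" for z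
    using assms(1) by (simp add: finite_digraph_walks_between)
  have "card (digraph_walks_between V E (Suc (Suc k)) x y) =
      (\<Sum>z\<in>{z \<in> V. E z y}. card ((\<lambda>p. p @ [y]) ` digraph_walks_between V E (Suc k) x z))"
    unfolding digraph_walks_between_Suc_Suc[OF assms(2)]
    by (rule card_UN_disjoint) (use assms(1) fin in \<open>auto simp: digraph_walks_between_def\<close>)
  also have "\<dots> = (\<Sum>z\<in>{z \<in> V. E z y}. card (digraph_walks_between V E (Suc k) x z))"
    by (intro sum.cong refl card_image) (auto simp: inj_on_def)
  also have "\<dots> = (\<Sum>z\<in>V. if E z y then card (digraph_walks_between V E (Suc k) x z) else 0)"
    using assms(1) by (simp add: sum.inter_filter)
  finally show ?thesis .
qed

lemma card_digraph_walks_Suc: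
  assumes "finite V"
  shows "card (digraph_walks V E (Suc k)) = (\<Sum>x\<in>V. \<Sum>y\<in>V. card (digraph_walks_between V E (Suc k) x y))"
proof -
  have "digraph_walks V E (Suc k) = (\<Union>x\<in>V. \<Union>y\<in>V. digraph_walks_between V E (Suc k) x y)"
  proof (rule Set.set_eqI, rule iffI)
    fix p assume p: "p \<in> digraph_walks V E (Suc k)"
    then have "p \<noteq> []" "set p \<subseteq> V" unfolding digraph_walks_def by auto
    then show "p \<in> (\<Union>x\<in>V. \<Union>y\<in>V. digraph_walks_between V E (Suc k) x y)"
      using p unfolding digraph_walks_between_def by auto
  qed (auto simp: digraph_walks_between_def)
  also have "card \<dots> = (\<Sum>x\<in>V. card (\<Union>y\<in>V. digraph_walks_between V E (Suc k) x y))"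
    by (rule card_UN_disjoint)
      (use assms finite_digraph_walks_between in \<open>auto simp: digraph_walks_between_def\<close>)
  also have "\<dots> = (\<Sum>x\<in>V. \<Sum>y\<in>V. card (digraph_walks_between V E (Suc k) x y))"
    by (intro sum.cong refl card_UN_disjoint)
      (use assms finite_digraph_walks_between in \<open>auto simp: digraph_walks_between_def\<close>)
  finally show ?thesis .
qed

lemma vertex_list:
  assumes "finite V"
  shows "distinct (vertex_list V)" "set (vertex_list V) = V" "length (vertex_list V) = card V"
proof -
  obtain xs where "set xs = V" "distinct xs" using finite_distinct_list[OF assms] by blast
  then have "distinct (vertex_list V) \<and> set (vertex_list V) = V"
    unfolding vertex_list_def by (metis (mono_tags, lifting) someI)
  then show "distinct (vertex_list V)" "set (vertex_list V) = V" "length (vertex_list V) = card V"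
    using distinct_card by metis+
qed

lemma sum_vertex_list:
  assumes "finite V" shows "(\<Sum>l<card V. g (vertex_list V ! l)) = (\<Sum>z\<in>V. g z)"
proof -
  have "bij_betw ((!) (vertex_list V)) {..<card V} V"
    using bij_betw_nth[OF vertex_list(1)[OF assms]] vertex_list[OF assms] by (simp add: lessThan_atLeast0)
  then show ?thesis by (rule sum.reindex_bij_betw)
qed

lemma adjacency_mat_carrier:
  assumes "finite V" shows "adjacency_mat V E \<in> carrier_mat (card V) (card V)"
  unfolding adjacency_mat_def Let_def using vertex_list(3)[OF assms] by simp

lemma index_adjacency_mat:
  assumes "finite V" "i < card V" "j < card V"
  shows "adjacency_mat V E $$ (i, j) = (if E (vertex_list V ! i) (vertex_list V ! j) then 1 else 0)"
  unfolding adjacency_mat_def Let_def using assms vertex_list(3)[OF assms(1)] by simp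

lemma index_adjacency_mat_pow:
  assumes V: "finite V" and ij: "i < card V" "j < card V"
  shows "(adjacency_mat V E ^\<^sub>m k) $$ (i, j) =
    of_nat (card (digraph_walks_between V E (Suc k) (vertex_list V ! i) (vertex_list V ! j)))"
  using ij(2)
proof (induction k arbitrary: j)
  case 0
  have "(vertex_list V ! i = vertex_list V ! j) = (i = j)"
    using vertex_list[OF V] ij(1) 0 nth_eq_iff_index_eq by metis
  moreover have "vertex_list V ! i \<in> V" "vertex_list V ! j \<in> V"
    using ij(1) 0 nth_mem vertex_list(2,3)[OF V] by metis+
  moreover have "dim_row (adjacency_mat V E) = card V"
    by (rule carrier_matD(1)[OF adjacency_mat_carrier[OF V]])
  ultimately show ?case using ij(1) 0 by (simp add: card_digraph_walks_between_Suc_0)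
next
  case (Suc k)
  let ?vs = "vertex_list V" and ?A = "adjacency_mat V E"
  have A: "?A \<in> carrier_mat (card V) (card V)" by (rule adjacency_mat_carrier[OF V])
  have "(?A ^\<^sub>m Suc k) $$ (i, j) = (\<Sum>l<card V. (?A ^\<^sub>m k) $$ (i, l) * ?A $$ (l, j))"
    using pow_carrier_mat[OF A] A ij(1) Suc.prems
    by (simp add: scalar_prod_def atLeast0LessThan)
  also have "\<dots> = (\<Sum>l<card V. of_nat
      (if E (?vs ! l) (?vs ! j) then card (digraph_walks_between V E (Suc k) (?vs ! i) (?vs ! l)) else 0))"
    by (intro sum.cong refl) (use Suc in \<open>simp add: index_adjacency_mat[OF V]\<close>)
  also have "\<dots> = of_nat (\<Sum>l<card V.
      if E (?vs ! l) (?vs ! j) then card (digraph_walks_between V E (Suc k) (?vs ! i) (?vs ! l)) else 0)"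
    by (rule of_nat_sum[symmetric])
  also have "\<dots> = of_nat (\<Sum>z\<in>V.
      if E z (?vs ! j) then card (digraph_walks_between V E (Suc k) (?vs ! i) z) else 0)"
    by (subst sum_vertex_list[OF V]) (rule refl)
  also have "\<dots> = of_nat (card (digraph_walks_between V E (Suc (Suc k)) (?vs ! i) (?vs ! j)))"
    using Suc.prems nth_mem vertex_list(2,3)[OF V]
    by (metis card_digraph_walks_between_Suc_Suc[OF V])
  finally show ?case .
qed

lemma card_digraph_walks_Suc_adjacency_mat:
  assumes V: "finite V"
  shows "real (card (digraph_walks V E (Suc k))) =
    (\<Sum>i<card V. \<Sum>j<card V. norm ((adjacency_mat V E ^\<^sub>m k) $$ (i, j)))"
proof -
  let ?vs = "vertex_list V" and ?W = "digraph_walks_between V E (Suc k)"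
  have "(\<Sum>i<card V. \<Sum>j<card V. norm ((adjacency_mat V E ^\<^sub>m k) $$ (i, j))) =
      (\<Sum>i<card V. \<Sum>j<card V. real (card (?W (?vs ! i) (?vs ! j))))"
    by (simp add: index_adjacency_mat_pow[OF V])
  also have "\<dots> = (\<Sum>i<card V. \<Sum>y\<in>V. real (card (?W (?vs ! i) y)))"
    by (intro sum.cong refl) (rule sum_vertex_list[OF V])
  also have "\<dots> = (\<Sum>x\<in>V. \<Sum>y\<in>V. real (card (?W x y)))"
    by (rule sum_vertex_list[OF V])
  also have "\<dots> = real (card (digraph_walks V E (Suc k)))"
    by (simp add: card_digraph_walks_Suc[OF V])
  finally show ?thesis by simp
qed

lemma digraph_spectral_radius_pow_le_card_walks:
  assumes V: "finite V" "V \<noteq> {}"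
  shows "digraph_spectral_radius V E ^ k \<le> card (digraph_walks V E (Suc k))"
  using spectral_radius_pow_le_sum_norm[OF adjacency_mat_carrier[OF V(1)], where k = k] V
  by (simp add: digraph_spectral_radius_def card_digraph_walks_Suc_adjacency_mat card_gt_0_iff)

lemma card_digraph_walks_le_if_spectral_radius_less:
  fixes t :: real
  assumes V: "finite V" "V \<noteq> {}" and t: "digraph_spectral_radius V E < t"
  shows "\<exists>C. \<forall>k. real (card (digraph_walks V E (Suc k))) \<le> C * t ^ k"
proof -
  let ?A = "adjacency_mat V E" and ?N = "card V"
  have A: "?A \<in> carrier_mat ?N ?N" by (rule adjacency_mat_carrier[OF V(1)])
  obtain C where C: "\<And>k. norm_bound (?A ^\<^sub>m k) (C * t ^ k)"
    using norm_bound_pow_mat_if_spectral_radius_less[OF A] V t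
    by (auto simp: digraph_spectral_radius_def card_gt_0_iff)
  have "real (card (digraph_walks V E (Suc k))) \<le> ?N * ?N * C * t ^ k" for k
  proof -
    have dims: "dim_row (?A ^\<^sub>m k) = ?N" "dim_col (?A ^\<^sub>m k) = ?N"
      using carrier_matD[OF pow_carrier_mat[OF A]] by blast+
    have "norm ((?A ^\<^sub>m k) $$ (i, j)) \<le> C * t ^ k" if "i < ?N" "j < ?N" for i j
      using C[of k] that unfolding norm_bound_def dims by blast
    then have "(\<Sum>i<?N. \<Sum>j<?N. norm ((?A ^\<^sub>m k) $$ (i, j))) \<le> (\<Sum>i<?N. \<Sum>j<?N. C * t ^ k)"
      by (intro sum_mono) auto
    then show ?thesis by (simp add: card_digraph_walks_Suc_adjacency_mat[OF V(1)])
  qed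
  then show ?thesis by blast
qed

lemma digraph_spectral_radius_nonneg:
  assumes "finite V" shows "0 \<le> digraph_spectral_radius V E"
proof (cases "V = {}")
  case False
  then show ?thesis using spectral_radius_nonneg[OF adjacency_mat_carrier[OF assms]] assms
    by (simp add: digraph_spectral_radius_def card_gt_0_iff)
qed (simp add: digraph_spectral_radius_def)

section \<open>Radius of convergence\<close>

lemma conv_radius_le_of_norm_le:
  fixes f g :: "nat \<Rightarrow> 'a :: {banach, real_normed_div_algebra}"
  assumes "\<And>n. norm (f n) \<le> norm (g n)"
  shows "conv_radius g \<le> conv_radius f"
proof (rule conv_radius_geI_ex')
  fix r :: real assume "0 < r" "ereal r < conv_radius g"
  then have "summable (\<lambda>n. norm (g n * of_real r ^ n))"
    by (intro abs_summable_in_conv_radius) simp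
  moreover have "norm (f n * of_real r ^ n) \<le> norm (g n * of_real r ^ n)" for n
    using assms[of n] by (simp add: norm_mult mult_right_mono)
  ultimately show "summable (\<lambda>n. f n * of_real r ^ n)"
    by (rule summable_comparison_test')
qed

lemma conv_radius_sum_ge:
  fixes f :: "'i \<Rightarrow> nat \<Rightarrow> 'a :: {banach, real_normed_div_algebra}"
  assumes "finite A"
  shows "(INF i\<in>A. conv_radius (f i)) \<le> conv_radius (\<lambda>n. \<Sum>i\<in>A. f i n)"
proof (rule conv_radius_geI_ex')
  fix r :: real assume r: "0 < r" "ereal r < (INF i\<in>A. conv_radius (f i))"
  have "summable (\<lambda>n. f i n * of_real r ^ n)" if "i \<in> A" for i
    using r INF_lower[OF that, of "\<lambda>i. conv_radius (f i)"] by (intro summable_in_conv_radius) auto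
  then have "summable (\<lambda>n. \<Sum>i\<in>A. f i n * of_real r ^ n)" by (rule summable_sum)
  then show "summable (\<lambda>n. (\<Sum>i\<in>A. f i n) * of_real r ^ n)" by (simp add: sum_distrib_right)
qed

lemma conv_radius_le_of_le_shifts:
  fixes f g :: "nat \<Rightarrow> real"
  assumes "\<And>m. 0 < m \<Longrightarrow> norm (g m) \<le> C * (\<Sum>j<J. norm (f (m + j)))"
  shows "conv_radius f \<le> conv_radius g"
proof (rule conv_radius_geI_ex')
  fix r :: real assume r: "0 < r" "ereal r < conv_radius f"
  have "summable (\<lambda>m. norm (f (m + j)) * r ^ (m + j))" for j
    using summable_ignore_initial_segment[OF abs_summable_in_conv_radius[of r f], of j] r
    by (simp add: abs_mult power_abs)
  then have sum: "summable (\<lambda>m. C * (\<Sum>j<J. norm (f (m + j)) * r ^ (m + j) * (1 / r) ^ j))"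
    by (intro summable_mult summable_sum summable_mult2)
  have bound: "norm (g m * r ^ m) \<le> C * (\<Sum>j<J. norm (f (m + j)) * r ^ (m + j) * (1 / r) ^ j)"
    if "0 < m" for m
  proof -
    have "r ^ (m + j) * (1 / r) ^ j = r ^ m" for j using r(1) by (simp add: power_add power_one_over)
    then have eq: "(\<Sum>j<J. norm (f (m + j)) * r ^ (m + j) * (1 / r) ^ j) =
        (\<Sum>j<J. norm (f (m + j))) * r ^ m"
      by (simp add: sum_distrib_right mult.assoc)
    have "norm (g m * r ^ m) = norm (g m) * r ^ m" using r(1) by (simp add: abs_mult)
    also have "\<dots> \<le> C * (\<Sum>j<J. norm (f (m + j))) * r ^ m"
      using assms[OF that] r(1) by (intro mult_right_mono) auto
    also have "\<dots> = C * (\<Sum>j<J. norm (f (m + j)) * r ^ (m + j) * (1 / r) ^ j)"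
      using eq by (simp only: mult.assoc)
    finally show ?thesis .
  qed
  have "summable (\<lambda>m. g m * r ^ m)"
  proof (rule summable_comparison_test'[OF sum, where N = 1])
    fix m :: nat assume "1 \<le> m"
    then show "norm (g m * r ^ m) \<le> C * (\<Sum>j<J. norm (f (m + j)) * r ^ (m + j) * (1 / r) ^ j)"
      by (intro bound) simp
  qed
  then show "summable (\<lambda>m. g m * of_real r ^ m)" by simp
qed

lemma summable_card_digraph_walks:
  assumes V: "finite V" "V \<noteq> {}" and r: "0 < r" "digraph_spectral_radius V E * r < 1"
  shows "summable (\<lambda>k. real (card (digraph_walks V E (Suc k))) * r ^ k)"
proof -
  have "digraph_spectral_radius V E < 1 / r" using r by (simp add: less_divide_eq)
  then obtain t where t: "digraph_spectral_radius V E < t" "t < 1 / r" using dense by blast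
  then have "t * r < 1" "0 \<le> t" using r(1) digraph_spectral_radius_nonneg[OF V(1), of E]
    by (simp_all add: less_divide_eq)
  obtain C where C: "\<And>k. real (card (digraph_walks V E (Suc k))) \<le> C * t ^ k"
    using card_digraph_walks_le_if_spectral_radius_less[OF V t(1)] by blast
  have "summable (\<lambda>k. C * (t * r) ^ k)"
    using \<open>t * r < 1\<close> \<open>0 \<le> t\<close> r(1) by (intro summable_mult summable_geometric) simp
  moreover have "norm (real (card (digraph_walks V E (Suc k))) * r ^ k) \<le> C * (t * r) ^ k" for k
    using mult_right_mono[OF C[of k], of "r ^ k"] r(1) by (simp add: power_mult_distrib mult.assoc)
  ultimately show ?thesis by (rule summable_comparison_test')
qed

lemma not_summable_card_digraph_walks:
  assumes V: "finite V" "V \<noteq> {}" and r: "0 < r" "1 < digraph_spectral_radius V E * r"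
  shows "\<not> summable (\<lambda>k. norm (real (card (digraph_walks V E (Suc k))) * r ^ k))"
proof
  let ?a = "\<lambda>k. norm (real (card (digraph_walks V E (Suc k))) * r ^ k)"
  have a: "1 \<le> ?a k" for k
  proof -
    have "1 \<le> (digraph_spectral_radius V E * r) ^ k" using r(2) by (simp add: one_le_power)
    also have "\<dots> \<le> real (card (digraph_walks V E (Suc k))) * r ^ k"
      unfolding power_mult_distrib using digraph_spectral_radius_pow_le_card_walks[OF V] r(1)
      by (intro mult_right_mono) auto
    finally show ?thesis by simp
  qed
  assume "summable ?a"
  then have "eventually (\<lambda>k. ?a k < 1) sequentially"
    by (intro order_tendstoD(2)[OF summable_LIMSEQ_zero]) simp_all
  then show False using a by (auto simp: eventually_sequentially not_less[symmetric])
qed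

theorem conv_radius_digraph_walks:
  fixes V :: "'v set" and E :: "'v \<Rightarrow> 'v \<Rightarrow> bool"
  assumes V: "finite V"
  defines "\<rho> \<equiv> digraph_spectral_radius V E"
  shows "conv_radius (\<lambda>m. real (card (digraph_walks V E m))) = (if \<rho> = 0 then \<infinity> else ereal (1 / \<rho>))"
proof (cases "V = {}")
  case True
  have "eventually (\<lambda>m. real (card (digraph_walks V E m)) = 0) sequentially"
  proof (rule eventually_sequentiallyI[of 1])
    fix m :: nat assume "1 \<le> m"
    then obtain m' where "m = Suc m'" by (cases m) auto
    then show "real (card (digraph_walks V E m)) = 0" using True by (simp add: digraph_walks_Suc_empty)
  qed
  then have "conv_radius (\<lambda>m. real (card (digraph_walks V E m))) = conv_radius (\<lambda>_. 0 :: real)"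
    by (rule conv_radius_cong')
  then show ?thesis using True by (simp add: \<rho>_def digraph_spectral_radius_def)
next
  case False
  have \<rho>: "0 \<le> \<rho>" unfolding \<rho>_def by (rule digraph_spectral_radius_nonneg[OF V])
  have "conv_radius (\<lambda>k. real (card (digraph_walks V E (Suc k)))) = (if \<rho> = 0 then \<infinity> else ereal (1 / \<rho>))"
  proof (rule conv_radius_eqI')
    fix r :: real assume r: "0 < r" "ereal r < (if \<rho> = 0 then \<infinity> else ereal (1 / \<rho>))"
    have "\<rho> * r < 1"
    proof (cases "\<rho> = 0")
      case False
      then have "r < 1 / \<rho>" using r(2) by simp
      then show ?thesis using False \<rho> by (simp add: less_divide_eq mult.commute)
    qed simp
    then show "summable (\<lambda>k. real (card (digraph_walks V E (Suc k))) * of_real r ^ k)"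
      using summable_card_digraph_walks[OF V False \<open>0 < r\<close>] unfolding \<rho>_def by simp
  next
    fix r :: real assume "0 < r" "(if \<rho> = 0 then \<infinity> else ereal (1 / \<rho>)) < ereal r"
    then have "\<rho> \<noteq> 0" "1 / \<rho> < r" by (auto split: if_splits)
    then have "1 < \<rho> * r" using \<rho> by (simp add: divide_less_eq mult.commute)
    then show "\<not> summable (\<lambda>k. norm (real (card (digraph_walks V E (Suc k))) * of_real r ^ k))"
      using not_summable_card_digraph_walks[OF V False \<open>0 < r\<close>] unfolding \<rho>_def by simp
  qed (use \<rho> in auto)
  then show ?thesis using conv_radius_shift[of "\<lambda>m. real (card (digraph_walks V E m))" 1] by simp
qed

section \<open>Cartier-Foata normal forms\<close>

locale concurrent_sys =
  fixes Sg :: "'a set" and I :: "('a \<times> 'a) set" and X :: "'s set"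
    and delta :: "'s option \<Rightarrow> 'a \<Rightarrow> 's option"
  assumes concurrent_system: "concurrent_system Sg I X delta"
begin

lemma finite_Sg: "finite Sg" and irrefl_I: "irrefl I" and sym_I: "sym I" and finite_X: "finite X"
  and delta_bot: "a \<in> Sg \<Longrightarrow> delta None a = None"
  and delta_closed: "x \<in> X \<Longrightarrow> a \<in> Sg \<Longrightarrow> delta (Some x) a \<in> insert None (Some ` X)"
  using concurrent_system unfolding concurrent_system_def trace_monoid_data_def by auto

lemma act_trace_eq:
  assumes "s \<in> insert None (Some ` X)" "u \<in> lists Sg" "v \<in> lists Sg" "(u, v) \<in> trace_eq I"
  shows "act delta s u = act delta s v"
  using concurrent_system assms unfolding concurrent_system_def by blast

lemma independent_neq: "(a, b) \<in> I \<Longrightarrow> a \<noteq> b"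
  using irrefl_I by (auto simp: irrefl_def)

lemma independent_sym: "(a, b) \<in> I \<Longrightarrow> (b, a) \<in> I"
  using sym_I by (auto dest: symD)

lemma act_bot: "w \<in> lists Sg \<Longrightarrow> act delta None w = None"
  by (induction w) (auto simp: delta_bot act_def)

lemma act_closed: "x \<in> X \<Longrightarrow> w \<in> lists Sg \<Longrightarrow> act delta (Some x) w \<in> insert None (Some ` X)"
proof (induction w arbitrary: x)
  case (Cons a w)
  have "delta (Some x) a \<in> insert None (Some ` X)" using Cons.prems delta_closed by simp
  then consider "delta (Some x) a = None" | y where "y \<in> X" "delta (Some x) a = Some y" by auto
  then show ?case
    by cases (use Cons act_bot in \<open>auto simp: act_def\<close>)
qed (simp add: act_def)

lemma finite_clique: "is_clique Sg I c \<Longrightarrow> finite c"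
  unfolding is_clique_def using finite_Sg finite_subset by blast

lemma clique_independent: "is_clique Sg I c \<Longrightarrow> a \<in> c \<Longrightarrow> b \<in> c \<Longrightarrow> a \<noteq> b \<Longrightarrow> (a, b) \<in> I"
  by (simp add: is_clique_def)

definition cf_normal :: "'a set list \<Rightarrow> bool" where
  "cf_normal cs \<longleftrightarrow> (\<forall>c\<in>set cs. is_clique Sg I c) \<and> successively (clique_arrow Sg I) cs"

lemma cf_normal_Cons:
  "cf_normal (c # q) \<longleftrightarrow> is_clique Sg I c \<and> cf_normal q \<and> (q \<noteq> [] \<longrightarrow> clique_arrow Sg I c (hd q))"
  unfolding cf_normal_def successively_Cons by auto

lemma cf_normal_append:
  "cf_normal (p @ q) \<longleftrightarrow>
    cf_normal p \<and> cf_normal q \<and> (p = [] \<or> q = [] \<or> clique_arrow Sg I (last p) (hd q))"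
  unfolding cf_normal_def successively_append_iff by auto

lemma set_cf_word: "cf_normal cs \<Longrightarrow> set (cf_word cs) = \<Union> (set cs)"
  unfolding cf_normal_def using clique_word(2) finite_clique by auto

lemma cf_word_in_lists: "cf_normal cs \<Longrightarrow> cf_word cs \<in> lists Sg"
  using set_cf_word unfolding cf_normal_def is_clique_def by fastforce

lemma cf_normal_insert_hd_clique:
  assumes "a \<in> Sg" "cf_normal q" "\<forall>b\<in>\<Union>(set q). (a, b) \<in> I"
  shows "cf_normal (insert_hd_clique a q)" "(cf_word q @ [a], cf_word (insert_hd_clique a q)) \<in> trace_eq I"
proof -
  have "cf_normal (insert_hd_clique a q) \<and> (cf_word q @ [a], cf_word (insert_hd_clique a q)) \<in> trace_eq I"
  proof (cases q)
    case Nil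
    then show ?thesis using assms(1) by (simp add: cf_normal_def is_clique_def)
  next
    case (Cons d q')
    have d: "is_clique Sg I d" "finite d" and q': "cf_normal q'"
      and arr: "q' \<noteq> [] \<longrightarrow> clique_arrow Sg I d (hd q')"
      using assms(2) Cons by (auto simp: cf_normal_Cons finite_clique)
    have ad: "\<forall>x\<in>d. (a, x) \<in> I" using assms(3) Cons by auto
    have ad': "is_clique Sg I (insert a d)"
      using d(1) ad assms(1) unfolding is_clique_def by (auto intro: independent_sym)
    moreover have "q' \<noteq> [] \<longrightarrow> clique_arrow Sg I (insert a d) (hd q')"
      using arr unfolding clique_arrow_def by blast
    ultimately have normal: "cf_normal (insert_hd_clique a q)" using Cons q' by (simp add: cf_normal_Cons)
    have "\<forall>b\<in>set (cf_word q'). (a, b) \<in> I" using assms(3) Cons set_cf_word[OF q'] by auto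
    then have "(cf_word q' @ [a], a # cf_word q') \<in> trace_eq I" by (rule trace_eq_commute_snoc[OF sym_I])
    then have "(cf_word q @ [a], clique_word d @ a # cf_word q') \<in> trace_eq I"
      using trace_eq_append_left[of _ _ I "clique_word d"] Cons by simp
    moreover have perm: "(clique_word d @ [a], clique_word (insert a d)) \<in> trace_eq I"
    proof (rule trace_eq_clique_perm[OF sym_I])
      have "a \<notin> d" using ad independent_neq by blast
      then show "distinct (clique_word d @ [a])" "set (clique_word d @ [a]) = set (clique_word (insert a d))"
        using clique_word[OF d(2)] clique_word[of "insert a d"] d(2) by auto
      show "distinct (clique_word (insert a d))" using clique_word[of "insert a d"] d(2) by simp
      show "\<forall>x\<in>set (clique_word d @ [a]). \<forall>y\<in>set (clique_word d @ [a]). x \<noteq> y \<longrightarrow> (x, y) \<in> I"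
        using ad' clique_word(2)[OF d(2)] unfolding is_clique_def by auto
    qed
    have "(clique_word d @ a # cf_word q', clique_word (insert a d) @ cf_word q') \<in> trace_eq I"
      using trace_eq_append_right[OF perm, of "cf_word q'"] by simp
    ultimately show ?thesis using normal Cons by (auto intro: trace_eq_trans)
  qed
  then show "cf_normal (insert_hd_clique a q)"
    "(cf_word q @ [a], cf_word (insert_hd_clique a q)) \<in> trace_eq I" by auto
qed

lemma clique_arrow_insert_hd_clique:
  assumes "a \<in> Sg" "cf_normal (c # q)" "x \<in> c" "(x, a) \<notin> I"
  shows "clique_arrow Sg I c (hd (insert_hd_clique a q))"
  using assms unfolding clique_arrow_def
  by (cases q) (auto simp: cf_normal_Cons clique_arrow_def is_clique_def)

lemma split_last_dependent:
  "(\<forall>b\<in>\<Union>(set cs). (a, b) \<in> I) \<or>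
   (\<exists>p c q. cs = p @ c # q \<and> (\<exists>x\<in>c. (x, a) \<notin> I) \<and> (\<forall>b\<in>\<Union>(set q). (a, b) \<in> I))"
proof (induction cs rule: rev_induct)
  case (snoc y ys)
  show ?case
  proof (cases "\<exists>x\<in>y. (x, a) \<notin> I")
    case True
    then show ?thesis by (intro disjI2 exI[of _ ys] exI[of _ y] exI[of _ "[]"]) auto
  next
    case False
    then have y: "\<forall>x\<in>y. (a, x) \<in> I" using independent_sym by blast
    from snoc show ?thesis
    proof
      assume "\<forall>b\<in>\<Union>(set ys). (a, b) \<in> I"
      then show ?thesis using y by auto
    next
      assume "\<exists>p c q. ys = p @ c # q \<and> (\<exists>x\<in>c. (x, a) \<notin> I) \<and> (\<forall>b\<in>\<Union>(set q). (a, b) \<in> I)"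
      then obtain p c q where "ys = p @ c # q" "\<exists>x\<in>c. (x, a) \<notin> I" "\<forall>b\<in>\<Union>(set q). (a, b) \<in> I"
        by blast
      then show ?thesis using y by (intro disjI2 exI[of _ p] exI[of _ c] exI[of _ "q @ [y]"]) auto
    qed
  qed
qed simp

text \<open>An appended letter a joins the clique after the last clique containing a letter that does
  not commute with a.\<close>

lemma cf_normal_snoc:
  assumes "cf_normal cs" "a \<in> Sg"
  shows "\<exists>cs'. cf_normal cs' \<and> (cf_word cs @ [a], cf_word cs') \<in> trace_eq I"
  using split_last_dependent[of cs a]
proof
  assume "\<forall>b\<in>\<Union>(set cs). (a, b) \<in> I"
  then show ?thesis using cf_normal_insert_hd_clique[OF assms(2,1)] by blast
next
  assume "\<exists>p c q. cs = p @ c # q \<and> (\<exists>x\<in>c. (x, a) \<notin> I) \<and> (\<forall>b\<in>\<Union>(set q). (a, b) \<in> I)"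
  then obtain p c q x where cs: "cs = p @ c # q" and x: "x \<in> c" "(x, a) \<notin> I"
    and q: "\<forall>b\<in>\<Union>(set q). (a, b) \<in> I" by blast
  have p: "cf_normal p" "p = [] \<or> clique_arrow Sg I (last p) c"
    and c: "is_clique Sg I c" and "cf_normal q"
    using assms(1) cs by (auto simp: cf_normal_append cf_normal_Cons)
  note ins = cf_normal_insert_hd_clique[OF assms(2) \<open>cf_normal q\<close> q]
  have "clique_arrow Sg I c (hd (insert_hd_clique a q))"
    using assms(1) cs by (intro clique_arrow_insert_hd_clique[OF assms(2) _ x]) (auto simp: cf_normal_append)
  then have "cf_normal (p @ c # insert_hd_clique a q)"
    using ins(1) c p insert_hd_clique_ne_Nil[of a q] by (auto simp: cf_normal_append cf_normal_Cons)
  moreover have "(cf_word cs @ [a], cf_word (p @ c # insert_hd_clique a q)) \<in> trace_eq I"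
    using trace_eq_append_left[OF ins(2), of "cf_word p @ clique_word c"] cs by simp
  ultimately show ?thesis by blast
qed

lemma cf_normal_form_exists: "w \<in> lists Sg \<Longrightarrow> \<exists>cs. cf_normal cs \<and> (w, cf_word cs) \<in> trace_eq I"
proof (induction w rule: rev_induct)
  case Nil
  show ?case by (intro exI[of _ "[]"]) (simp add: cf_normal_def)
next
  case (snoc a w)
  then obtain cs where cs: "cf_normal cs" "(w, cf_word cs) \<in> trace_eq I" by auto
  from cf_normal_snoc[OF cs(1)] snoc.prems obtain cs' where
    "cf_normal cs'" "(cf_word cs @ [a], cf_word cs') \<in> trace_eq I" by auto
  moreover have "(w @ [a], cf_word cs @ [a]) \<in> trace_eq I" using trace_eq_append_right[OF cs(2)] .
  ultimately show ?case by (blast intro: trace_eq_trans)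
qed

lemma cf_normal_eq_Nil_if_proj_pair_Nil:
  assumes "cf_normal cs" "\<forall>a\<in>Sg. \<forall>b\<in>Sg. (a, b) \<notin> I \<longrightarrow> proj_pair a b (cf_word cs) = []"
  shows "cs = []"
proof (cases cs)
  case (Cons c r)
  then obtain a where "a \<in> c" "a \<in> Sg" using assms(1) by (auto simp: cf_normal_Cons is_clique_def)
  moreover have "(a, a) \<notin> I" using irrefl_I by (simp add: irrefl_def)
  ultimately have "proj_pair a a (cf_word cs) = []" "a \<in> set (cf_word cs)"
    using assms set_cf_word[OF assms(1)] Cons by auto
  then show ?thesis by (simp add: proj_pair_self_eq_Nil_iff)
qed simp

lemma dependent_letter_precedes:
  assumes "cf_normal (c # r)" "a \<in> \<Union>(set (c # r))" "a \<notin> c"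
  shows "\<exists>b\<in>Sg. b \<noteq> a \<and> (a, b) \<notin> I \<and> hd (proj_pair a b (cf_word (c # r))) = b"
  using assms
proof (induction r arbitrary: c)
  case (Cons d r)
  have c: "is_clique Sg I c" "finite c" and d: "cf_normal (d # r)" and cd: "clique_arrow Sg I c d"
    using Cons.prems(1) by (auto simp: cf_normal_Cons finite_clique)
  show ?case
  proof (cases "a \<in> d")
    case True
    then obtain x where x: "x \<in> c" "(x, a) \<in> Sg \<times> Sg - I" using cd unfolding clique_arrow_def by blast
    then have "x \<noteq> a" "(a, x) \<notin> I" "c \<inter> {a, x} = {x}" using Cons.prems(3) independent_sym by auto
    moreover from this(3) have "hd (proj_pair a x (clique_word c @ cf_word (d # r))) = x"
      by (rule hd_proj_pair_clique_word_append[OF c(2)])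
    ultimately show ?thesis using x by auto
  next
    case False
    then obtain b where b: "b \<in> Sg" "b \<noteq> a" "(a, b) \<notin> I" "hd (proj_pair a b (cf_word (d # r))) = b"
      using Cons.IH[OF d] Cons.prems(2,3) by auto
    have "hd (proj_pair a b (cf_word (c # d # r))) = b"
    proof (cases "b \<in> c")
      case True
      then have "c \<inter> {a, b} = {b}" using Cons.prems(3) by auto
      then have "hd (proj_pair a b (clique_word c @ cf_word (d # r))) = b"
        by (rule hd_proj_pair_clique_word_append[OF c(2)])
      then show ?thesis by simp
    next
      case False
      then have "proj_pair a b (clique_word c) = []"
        using Cons.prems(3) clique_word(2)[OF c(2)] by (auto simp: proj_pair_def filter_empty_conv)
      then show ?thesis using b(4) by simp
    qed
    then show ?thesis using b by blast
  qed
qed simp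

lemma mem_hd_clique_iff:
  assumes "cf_normal (c # r)" "a \<in> Sg"
  shows "a \<in> c \<longleftrightarrow> a \<in> set (cf_word (c # r)) \<and>
    (\<forall>b\<in>Sg. b \<noteq> a \<longrightarrow> (a, b) \<notin> I \<longrightarrow> hd (proj_pair a b (cf_word (c # r))) = a)"
proof
  assume a: "a \<in> c"
  have c: "is_clique Sg I c" using assms(1) by (simp add: cf_normal_Cons)
  have "hd (proj_pair a b (cf_word (c # r))) = a" if "b \<noteq> a" "(a, b) \<notin> I" for b
  proof -
    have "b \<notin> c" using clique_independent[OF c a] that by blast
    then have "c \<inter> {a, b} = {a}" using a by auto
    then have "hd (proj_pair a b (clique_word c @ cf_word r)) = a"
      by (rule hd_proj_pair_clique_word_append[OF finite_clique[OF c]])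
    then show ?thesis by simp
  qed
  then show "a \<in> set (cf_word (c # r)) \<and>
      (\<forall>b\<in>Sg. b \<noteq> a \<longrightarrow> (a, b) \<notin> I \<longrightarrow> hd (proj_pair a b (cf_word (c # r))) = a)"
    using a set_cf_word[OF assms(1)] by auto
next
  assume a: "a \<in> set (cf_word (c # r)) \<and>
      (\<forall>b\<in>Sg. b \<noteq> a \<longrightarrow> (a, b) \<notin> I \<longrightarrow> hd (proj_pair a b (cf_word (c # r))) = a)"
  show "a \<in> c"
  proof (rule ccontr)
    assume "a \<notin> c"
    moreover have "a \<in> \<Union>(set (c # r))" using a set_cf_word[OF assms(1)] by blast
    ultimately obtain b where "b \<in> Sg" "b \<noteq> a" "(a, b) \<notin> I"
      "hd (proj_pair a b (cf_word (c # r))) = b"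
      using dependent_letter_precedes[OF assms(1)] by blast
    then show False using a by auto
  qed
qed

lemma cf_normal_eq_if_proj_pair_eq:
  assumes "cf_normal cs1" "cf_normal cs2"
    "\<forall>a\<in>Sg. \<forall>b\<in>Sg. (a, b) \<notin> I \<longrightarrow> proj_pair a b (cf_word cs1) = proj_pair a b (cf_word cs2)"
  shows "cs1 = cs2"
  using assms
proof (induction cs1 arbitrary: cs2)
  case Nil
  have "cs2 = []" using Nil.prems(2,3) by (intro cf_normal_eq_Nil_if_proj_pair_Nil) auto
  then show ?case by simp
next
  case (Cons c1 r1)
  show ?case
  proof (cases cs2)
    case Nil
    have "c1 # r1 = []" using Cons.prems(1,3) Nil by (intro cf_normal_eq_Nil_if_proj_pair_Nil) auto
    then show ?thesis by simp
  next
    case (Cons c2 r2)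
    let ?w1 = "cf_word (c1 # r1)" and ?w2 = "cf_word (c2 # r2)"
    have normal: "cf_normal (c1 # r1)" "cf_normal (c2 # r2)" using Cons.prems Cons by auto
    have proj: "proj_pair a b ?w1 = proj_pair a b ?w2" if "a \<in> Sg" "b \<in> Sg" "(a, b) \<notin> I" for a b
      using Cons.prems(3) Cons that by auto
    have "a \<in> c1 \<longleftrightarrow> a \<in> c2" if "a \<in> Sg" for a
    proof -
      have "(a, a) \<notin> I" using irrefl_I by (auto simp: irrefl_def)
      then have "proj_pair a a ?w1 = proj_pair a a ?w2" using proj[OF that that] by simp
      then have "set ?w1 \<inter> {a, a} = set ?w2 \<inter> {a, a}" by (metis set_proj_pair)
      then have "a \<in> set ?w1 \<longleftrightarrow> a \<in> set ?w2" by blast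
      then show ?thesis
        using proj[OF that] mem_hd_clique_iff[OF normal(1) that] mem_hd_clique_iff[OF normal(2) that] by simp
    qed
    moreover have "c1 \<subseteq> Sg" "c2 \<subseteq> Sg" using normal by (auto simp: cf_normal_Cons is_clique_def)
    ultimately have c: "c1 = c2" by blast
    have "cf_normal r1" "cf_normal r2" using normal by (auto simp: cf_normal_Cons)
    moreover have "\<forall>a\<in>Sg. \<forall>b\<in>Sg. (a, b) \<notin> I \<longrightarrow> proj_pair a b (cf_word r1) = proj_pair a b (cf_word r2)"
      using proj c by simp
    ultimately show ?thesis using Cons.IH c Cons by blast
  qed
qed

theorem cf_normal_unique:
  assumes "cf_normal cs1" "cf_normal cs2" "(cf_word cs1, cf_word cs2) \<in> trace_eq I"
  shows "cs1 = cs2"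
  using assms proj_pair_trace_eq[OF sym_I irrefl_I] by (intro cf_normal_eq_if_proj_pair_eq) auto

section \<open>Traces and walks in the ADSC\<close>

abbreviation D where "D \<equiv> DSC_nodes Sg I X delta"
abbreviation V where "V \<equiv> ADSC_nodes Sg I X delta"
abbreviation E where "E \<equiv> ADSC_arc Sg I X delta"
abbreviation walks where "walks \<equiv> digraph_walks V E"

lemma DSC_nodesD:
  assumes "(\<alpha>, c) \<in> D"
  shows "\<alpha> \<in> X" "is_clique Sg I c" "act_clique delta (Some \<alpha>) c \<noteq> None" "finite c"
    "1 \<le> card c" "card c \<le> card Sg"
proof -
  show "\<alpha> \<in> X" "is_clique Sg I c" "act_clique delta (Some \<alpha>) c \<noteq> None"
    using assms unfolding DSC_nodes_def by auto
  then have c: "is_clique Sg I c" and "finite c" using finite_clique by blast+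
  show "finite c" by fact
  show "1 \<le> card c" using c \<open>finite c\<close> unfolding is_clique_def by (simp add: Suc_leI card_gt_0_iff)
  show "card c \<le> card Sg" using c finite_Sg unfolding is_clique_def by (simp add: card_mono)
qed

lemma ADSC_nodes_iff: "(\<alpha>, c, i) \<in> V \<longleftrightarrow> (\<alpha>, c) \<in> D \<and> 1 \<le> i \<and> i \<le> card c"
  unfolding ADSC_nodes_def by auto

lemma finite_ADSC_nodes: "finite V"
proof (rule finite_subset)
  show "V \<subseteq> X \<times> Pow Sg \<times> {..card Sg}"
  proof
    fix x assume "x \<in> V"
    then obtain \<alpha> c i where "x = (\<alpha>, c, i)" "(\<alpha>, c) \<in> D" "i \<le> card c"
      unfolding ADSC_nodes_def by auto
    then show "x \<in> X \<times> Pow Sg \<times> {..card Sg}"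
      using DSC_nodesD(1,2,6) unfolding is_clique_def by fastforce
  qed
  show "finite (X \<times> Pow Sg \<times> {..card Sg})" using finite_X finite_Sg by simp
qed

lemma finite_walks: "finite (walks m)"
  by (rule finite_digraph_walks[OF finite_ADSC_nodes])

lemma ADSC_arc_nodes: "E x y \<Longrightarrow> x \<in> V \<and> y \<in> V"
  unfolding ADSC_arc_def by (cases x; cases y) auto

lemma ADSC_arc_inner:
  "(\<alpha>, c) \<in> D \<Longrightarrow> 1 \<le> i \<Longrightarrow> i < card c \<Longrightarrow> E (\<alpha>, c, i) (\<alpha>, c, Suc i)"
  unfolding ADSC_arc_def ADSC_nodes_iff by auto

lemma ADSC_arc_jump:
  assumes "(\<alpha>, c) \<in> D" "(\<beta>, d) \<in> D" "act_clique delta (Some \<alpha>) c = Some \<beta>" "clique_arrow Sg I c d"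
  shows "E (\<alpha>, c, card c) (\<beta>, d, 1)"
  using assms DSC_nodesD(5)[OF assms(1)] DSC_nodesD(5)[OF assms(2)]
  unfolding ADSC_arc_def DSC_arc_def ADSC_nodes_iff by auto

lemma ADSC_arc_from_inner: "E (\<alpha>, c, i) y \<Longrightarrow> i < card c \<Longrightarrow> y = (\<alpha>, c, Suc i)"
  unfolding ADSC_arc_def by (cases y) auto

lemma ADSC_arc_from_last:
  assumes "E (\<alpha>, c, card c) y"
  shows "\<exists>\<beta> d. y = (\<beta>, d, 1) \<and> DSC_arc Sg I X delta (\<alpha>, c) (\<beta>, d)"
proof -
  obtain \<beta> d j where y: "y = (\<beta>, d, j)" by (cases y) auto
  then have "j \<le> card d" using ADSC_arc_nodes[OF assms] ADSC_nodes_iff by blast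
  then show ?thesis using assms y unfolding ADSC_arc_def by auto
qed

text \<open>The node (\<alpha>, c, i) of the ADSC reads the i-th letter, counting from 1, of the fixed
  enumeration \<^term>\<open>clique_word c\<close> of the clique c.\<close>

definition walk_word :: "('s \<times> 'a set \<times> nat) list \<Rightarrow> 'a list" where
  "walk_word p = map (\<lambda>(\<alpha>, c, i). clique_word c ! (i - 1)) p"

definition clique_block :: "'s \<Rightarrow> 'a set \<Rightarrow> ('s \<times> 'a set \<times> nat) list" where
  "clique_block \<alpha> c = map (\<lambda>i. (\<alpha>, c, i)) [1..<Suc (card c)]"

fun cf_walk :: "'s \<Rightarrow> 'a set list \<Rightarrow> ('s \<times> 'a set \<times> nat) list" where
  "cf_walk \<alpha> [] = []"
| "cf_walk \<alpha> (c # cs) = clique_block \<alpha> c @ cf_walk (the (act_clique delta (Some \<alpha>) c)) cs"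

fun executable :: "'s \<Rightarrow> 'a set list \<Rightarrow> bool" where
  "executable \<alpha> [] = True"
| "executable \<alpha> (c # cs) \<longleftrightarrow> (\<alpha>, c) \<in> D \<and> executable (the (act_clique delta (Some \<alpha>) c)) cs"

lemma length_walk_word [simp]: "length (walk_word p) = length p"
  by (simp add: walk_word_def)

lemma walk_word_append: "walk_word (p @ q) = walk_word p @ walk_word q"
  by (simp add: walk_word_def)

lemma length_clique_block [simp]: "length (clique_block \<alpha> c) = card c"
  by (simp add: clique_block_def)

lemma nth_clique_block: "k < card c \<Longrightarrow> clique_block \<alpha> c ! k = (\<alpha>, c, Suc k)"
  by (simp add: clique_block_def del: upt_Suc)

lemma walk_word_clique_block: "finite c \<Longrightarrow> walk_word (clique_block \<alpha> c) = clique_word c"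
  by (rule nth_equalityI) (auto simp: length_clique_word walk_word_def nth_clique_block)

lemma walk_word_cf_walk: "cf_normal cs \<Longrightarrow> walk_word (cf_walk \<alpha> cs) = cf_word cs"
proof (induction cs arbitrary: \<alpha>)
  case (Cons c cs)
  then show ?case
    by (simp add: walk_word_append walk_word_clique_block cf_normal_Cons finite_clique)
qed (simp add: walk_word_def)

lemma clique_block_walk:
  assumes "(\<alpha>, c) \<in> D"
  shows "set (clique_block \<alpha> c) \<subseteq> V" "successively E (clique_block \<alpha> c)" "clique_block \<alpha> c \<noteq> []"
    "hd (clique_block \<alpha> c) = (\<alpha>, c, 1)" "last (clique_block \<alpha> c) = (\<alpha>, c, card c)"
proof -
  have c1: "1 \<le> card c" using DSC_nodesD(5)[OF assms] .
  show "set (clique_block \<alpha> c) \<subseteq> V" unfolding clique_block_def using assms by (auto simp: ADSC_nodes_iff)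
  show "successively E (clique_block \<alpha> c)" unfolding successively_conv_nth
    using ADSC_arc_inner[OF assms] by (auto simp: nth_clique_block)
  show "clique_block \<alpha> c \<noteq> []" using c1 by (auto simp: clique_block_def)
  show "hd (clique_block \<alpha> c) = (\<alpha>, c, 1)" using c1 by (simp add: clique_block_def hd_map del: upt_Suc)
  show "last (clique_block \<alpha> c) = (\<alpha>, c, card c)" using c1 by (auto simp: clique_block_def)
qed

lemma cf_walk_walk:
  "executable \<alpha> cs \<Longrightarrow> cf_normal cs \<Longrightarrow> set (cf_walk \<alpha> cs) \<subseteq> V \<and> successively E (cf_walk \<alpha> cs)"
proof (induction cs arbitrary: \<alpha>)
  case (Cons c cs)
  define \<beta> where "\<beta> = the (act_clique delta (Some \<alpha>) c)"
  have c: "(\<alpha>, c) \<in> D" and cs: "executable \<beta> cs" "cf_normal cs"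
    using Cons.prems by (auto simp: \<beta>_def cf_normal_Cons)
  have \<alpha>\<beta>: "act_clique delta (Some \<alpha>) c = Some \<beta>" using DSC_nodesD(3)[OF c] by (auto simp: \<beta>_def)
  have "E (last (clique_block \<alpha> c)) (hd (cf_walk \<beta> cs))" if "cs = d # cs'" for d cs'
  proof -
    have d: "(\<beta>, d) \<in> D" and cd: "clique_arrow Sg I c d"
      using cs(1) Cons.prems(2) that by (auto simp: cf_normal_Cons)
    then show ?thesis
      using ADSC_arc_jump[OF c d \<alpha>\<beta> cd] clique_block_walk(3,4)[OF d] clique_block_walk(5)[OF c] that
      by simp
  qed
  then show ?case using clique_block_walk[OF c] Cons.IH[OF cs]
    by (cases cs) (auto simp: \<beta>_def[symmetric] successively_append_iff)
qed simp

lemma executable_if_act_ne_bot: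
  "\<alpha> \<in> X \<Longrightarrow> cf_normal cs \<Longrightarrow> act delta (Some \<alpha>) (cf_word cs) \<noteq> None \<Longrightarrow> executable \<alpha> cs"
proof (induction cs arbitrary: \<alpha>)
  case (Cons c cs)
  have c: "is_clique Sg I c" and cs: "cf_normal cs" using Cons.prems by (auto simp: cf_normal_Cons)
  have "clique_word c \<in> lists Sg"
    using clique_word(2)[OF finite_clique[OF c]] c unfolding is_clique_def by auto
  then have "act delta (Some \<alpha>) (clique_word c) \<in> insert None (Some ` X)"
    by (rule act_closed[OF Cons.prems(1)])
  moreover have "act delta (Some \<alpha>) (clique_word c) \<noteq> None"
  proof
    assume "act delta (Some \<alpha>) (clique_word c) = None"
    then show False using Cons.prems(3) act_bot[OF cf_word_in_lists[OF cs]] by (simp add: act_append)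
  qed
  ultimately obtain \<beta> where \<beta>: "\<beta> \<in> X" "act delta (Some \<alpha>) (clique_word c) = Some \<beta>" by auto
  have "executable \<beta> cs" using Cons.IH[OF \<beta>(1) cs] Cons.prems(3) \<beta> by (simp add: act_append)
  moreover have "(\<alpha>, c) \<in> D" unfolding DSC_nodes_def act_clique_def using Cons.prems(1) c \<beta> by auto
  ultimately show ?case using \<beta> by (simp add: act_clique_def)
qed simp

lemma act_cf_word_if_executable:
  "\<alpha> \<in> X \<Longrightarrow> executable \<alpha> cs \<Longrightarrow> cf_normal cs \<Longrightarrow> \<exists>\<beta>\<in>X. act delta (Some \<alpha>) (cf_word cs) = Some \<beta>"
proof (induction cs arbitrary: \<alpha>)
  case (Cons c cs)
  have c: "(\<alpha>, c) \<in> D" "is_clique Sg I c" and cs: "cf_normal cs"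
    using Cons.prems by (auto simp: cf_normal_Cons)
  have "clique_word c \<in> lists Sg"
    using clique_word(2)[OF finite_clique[OF c(2)]] c(2) unfolding is_clique_def by auto
  then have "act delta (Some \<alpha>) (clique_word c) \<in> insert None (Some ` X)"
    by (rule act_closed[OF Cons.prems(1)])
  moreover have "act delta (Some \<alpha>) (clique_word c) \<noteq> None"
    using DSC_nodesD(3)[OF c(1)] by (simp add: act_clique_def)
  ultimately obtain \<beta> where \<beta>: "\<beta> \<in> X" "act delta (Some \<alpha>) (clique_word c) = Some \<beta>" by auto
  have "executable \<beta> cs" using Cons.prems \<beta> by (simp add: act_clique_def)
  then show ?case using Cons.IH[OF \<beta>(1) _ cs] \<beta> by (simp add: act_append)
qed (simp add: act_def)

definition trace_classes :: "'s \<Rightarrow> 's \<Rightarrow> nat \<Rightarrow> 'a list set set" where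
  "trace_classes \<alpha> \<beta> n = {w \<in> lists Sg. length w = n \<and> act delta (Some \<alpha>) w = Some \<beta>} // trace_eq I"

lemma trace_count_eq_card: "trace_count Sg I delta \<alpha> \<beta> n = card (trace_classes \<alpha> \<beta> n)"
  by (simp add: trace_count_def trace_classes_def)

lemma finite_trace_classes: "finite (trace_classes \<alpha> \<beta> n)"
proof -
  have "{w \<in> lists Sg. length w = n \<and> act delta (Some \<alpha>) w = Some \<beta>} \<subseteq> {w. set w \<subseteq> Sg \<and> length w = n}"
    by auto
  then have "finite {w \<in> lists Sg. length w = n \<and> act delta (Some \<alpha>) w = Some \<beta>}"
    using finite_lists_length_eq[OF finite_Sg] finite_subset by blast
  then show ?thesis unfolding trace_classes_def quotient_def by simp
qed

lemma walk_of_trace: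
  assumes "\<alpha> \<in> X" "w \<in> lists Sg" "act delta (Some \<alpha>) w = Some \<beta>"
  shows "\<exists>p \<in> walks (length w). (w, walk_word p) \<in> trace_eq I"
proof -
  obtain cs where cs: "cf_normal cs" "(w, cf_word cs) \<in> trace_eq I"
    using cf_normal_form_exists[OF assms(2)] by blast
  have "act delta (Some \<alpha>) (cf_word cs) = Some \<beta>"
    using act_trace_eq[of "Some \<alpha>" w "cf_word cs"] assms cf_word_in_lists[OF cs(1)] cs(2) by simp
  then have "executable \<alpha> cs" using executable_if_act_ne_bot[OF assms(1) cs(1)] by simp
  then have walk: "set (cf_walk \<alpha> cs) \<subseteq> V \<and> successively E (cf_walk \<alpha> cs)"
    by (rule cf_walk_walk[OF _ cs(1)])
  have "length (cf_walk \<alpha> cs) = length (cf_word cs)"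
    using length_walk_word walk_word_cf_walk[OF cs(1)] by metis
  also have "\<dots> = length w" using trace_eq_length[OF cs(2)] by simp
  finally have "cf_walk \<alpha> cs \<in> walks (length w)" using walk unfolding digraph_walks_def by simp
  moreover have "(w, walk_word (cf_walk \<alpha> cs)) \<in> trace_eq I"
    using cs(2) walk_word_cf_walk[OF cs(1)] by simp
  ultimately show ?thesis by blast
qed

lemma trace_count_le_card_walks:
  assumes "\<alpha> \<in> X"
  shows "trace_count Sg I delta \<alpha> \<beta> n \<le> card (walks n)"
proof -
  define Q where "Q = trace_classes \<alpha> \<beta> n"
  have "\<forall>C\<in>Q. \<exists>p. p \<in> walks n \<and> walk_word p \<in> C"
  proof
    fix C assume "C \<in> Q"
    then obtain w where w: "w \<in> lists Sg" "length w = n" "act delta (Some \<alpha>) w = Some \<beta>"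
      and C: "C = trace_eq I `` {w}" unfolding Q_def trace_classes_def by (auto elim: quotientE)
    then show "\<exists>p. p \<in> walks n \<and> walk_word p \<in> C" using walk_of_trace[OF assms w(1,3)] by auto
  qed
  then obtain f where f: "\<forall>C\<in>Q. f C \<in> walks n \<and> walk_word (f C) \<in> C" by (rule bchoice[THEN exE])
  have "inj_on f Q"
  proof
    fix C1 C2 assume C: "C1 \<in> Q" "C2 \<in> Q" "f C1 = f C2"
    obtain w1 w2 where w: "C1 = trace_eq I `` {w1}" "C2 = trace_eq I `` {w2}"
      using C(1,2) unfolding Q_def trace_classes_def by (auto elim!: quotientE)
    have "(w1, walk_word (f C1)) \<in> trace_eq I" "(w2, walk_word (f C1)) \<in> trace_eq I"
      using f C w by auto
    then have "(w1, w2) \<in> trace_eq I" using trace_eq_trans trace_eq_sym[OF sym_I] by metis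
    then show "C1 = C2" using w equiv_class_eq[OF equiv_trace_eq[OF sym_I]] by simp
  qed
  then have "card Q \<le> card (walks n)" using f finite_walks by (intro card_inj_on_le) auto
  then show ?thesis unfolding trace_count_eq_card Q_def .
qed

abbreviation at_block_end :: "'s \<times> 'a set \<times> nat \<Rightarrow> bool" where
  "at_block_end x \<equiv> snd (snd x) = card (fst (snd x))"

text \<open>Complete walks start at the first letter of a clique and stop at the last letter of one; they
  are exactly the walks reading Cartier-Foata normal forms.\<close>

definition complete_walks :: "nat \<Rightarrow> ('s \<times> 'a set \<times> nat) list set" where
  "complete_walks m = {p \<in> walks m. p \<noteq> [] \<and> snd (snd (hd p)) = 1 \<and> at_block_end (last p)}"

lemma walk_prefix_clique_block:
  assumes "successively E p" "set p \<subseteq> V" "p \<noteq> []" "hd p = (\<alpha>, c, i)" "i \<le> card c"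
    "at_block_end (last p)"
  shows "card c - i + 1 \<le> length p \<and> take (card c - i + 1) p = map (\<lambda>t. (\<alpha>, c, t)) [i..<Suc (card c)]"
  using assms
proof (induction p arbitrary: i)
  case (Cons x p)
  have x: "x = (\<alpha>, c, i)" using Cons.prems by simp
  show ?case
  proof (cases "i < card c")
    case True
    then obtain y p' where p: "p = y # p'" using Cons.prems x by (cases p) auto
    then have y: "y = (\<alpha>, c, Suc i)" using ADSC_arc_from_inner Cons.prems(1) x True by simp
    have IH: "card c - Suc i + 1 \<le> length p \<and>
        take (card c - Suc i + 1) p = map (\<lambda>t. (\<alpha>, c, t)) [Suc i..<Suc (card c)]"
      using Cons.prems p y True by (intro Cons.IH) auto
    have "card c - i + 1 = Suc (card c - Suc i + 1)" using True by simp
    moreover have "[i..<Suc (card c)] = i # [Suc i..<Suc (card c)]" using True by (simp add: upt_conv_Cons)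
    ultimately show ?thesis using IH x by simp
  next
    case False
    then show ?thesis using Cons.prems x by simp
  qed
qed simp

lemma complete_walk_cf_walk:
  "successively E p \<Longrightarrow> set p \<subseteq> V \<Longrightarrow> p \<noteq> [] \<Longrightarrow> hd p = (\<alpha>, c, 1) \<Longrightarrow> at_block_end (last p) \<Longrightarrow>
   \<exists>cs. cf_normal cs \<and> executable \<alpha> cs \<and> p = cf_walk \<alpha> cs"
proof (induction "length p" arbitrary: p \<alpha> c rule: less_induct)
  case less
  have "hd p \<in> V" using less.prems(2,3) by auto
  then have c: "(\<alpha>, c) \<in> D" using less.prems(4) ADSC_nodes_iff by auto
  have c1: "1 \<le> card c" using DSC_nodesD(5)[OF c] .
  have "card c \<le> length p \<and> take (card c) p = clique_block \<alpha> c"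
    using walk_prefix_clique_block[OF less.prems(1-4) c1 less.prems(5)] c1 by (simp add: clique_block_def)
  then obtain rest where p: "p = clique_block \<alpha> c @ rest" by (metis append_take_drop_id)
  show ?case
  proof (cases "rest = []")
    case True
    then show ?thesis using p c DSC_nodesD(2)[OF c] by (intro exI[of _ "[c]"]) (simp add: cf_normal_def)
  next
    case False
    have rest: "successively E rest" "E (\<alpha>, c, card c) (hd rest)"
      using less.prems(1) False clique_block_walk(3,5)[OF c] unfolding p successively_append_iff by auto
    then obtain \<beta> d where hd_rest: "hd rest = (\<beta>, d, 1)" and "DSC_arc Sg I X delta (\<alpha>, c) (\<beta>, d)"
      using ADSC_arc_from_last by blast
    then have \<alpha>\<beta>: "act_clique delta (Some \<alpha>) c = Some \<beta>" and cd: "clique_arrow Sg I c d"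
      unfolding DSC_arc_def by auto
    have "set rest \<subseteq> V" "at_block_end (last rest)" "length rest < length p"
      using less.prems(2,5) p False c1 by auto
    then obtain cs where cs: "cf_normal cs" "executable \<beta> cs" "rest = cf_walk \<beta> cs"
      using less.hyps rest(1) False hd_rest by blast
    moreover from this have "cs \<noteq> []" using False by auto
    then obtain d' cs' where cs': "cs = d' # cs'" by (cases cs) auto
    then have "(\<beta>, d') \<in> D" using cs(2) by simp
    then have "hd rest = (\<beta>, d', 1)" using cs(3) cs' clique_block_walk(3,4) by simp
    then have "hd cs = d" using hd_rest cs' by simp
    ultimately have "cf_normal (c # cs)"
      using \<open>cs \<noteq> []\<close> DSC_nodesD(2)[OF c] cd by (simp add: cf_normal_Cons)
    moreover have "executable \<alpha> (c # cs)" "p = cf_walk \<alpha> (c # cs)" using c cs \<alpha>\<beta> p by simp_all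
    ultimately show ?thesis by blast
  qed
qed

lemma complete_walksD:
  assumes "p \<in> complete_walks l"
  shows "\<exists>cs. cf_normal cs \<and> executable (fst (hd p)) cs \<and> cf_walk (fst (hd p)) cs = p \<and> fst (hd p) \<in> X"
proof -
  obtain \<alpha> c i where h: "hd p = (\<alpha>, c, i)" by (cases "hd p") auto
  have p: "successively E p" "set p \<subseteq> V" "p \<noteq> []" "i = 1" "at_block_end (last p)"
    using assms h unfolding complete_walks_def digraph_walks_def by auto
  then have "hd p \<in> V" by auto
  then have "(\<alpha>, c) \<in> D" using h ADSC_nodes_iff by simp
  then have "\<alpha> \<in> X" by (rule DSC_nodesD(1))
  moreover obtain cs where "cf_normal cs" "executable \<alpha> cs" "p = cf_walk \<alpha> cs"
    using complete_walk_cf_walk[OF p(1-3) _ p(5)] h p(4) by blast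
  ultimately show ?thesis using h by auto
qed

lemma complete_walk_trace_class:
  assumes p: "p \<in> complete_walks l"
  shows "\<exists>\<beta>\<in>X. fst (hd p) \<in> X \<and> act delta (Some (fst (hd p))) (walk_word p) = Some \<beta> \<and>
    trace_eq I `` {walk_word p} \<in> trace_classes (fst (hd p)) \<beta> l"
proof -
  obtain cs where cs: "cf_normal cs" "executable (fst (hd p)) cs"
    "cf_walk (fst (hd p)) cs = p" "fst (hd p) \<in> X" using complete_walksD[OF p] by blast
  obtain \<beta> where \<beta>: "\<beta> \<in> X" "act delta (Some (fst (hd p))) (cf_word cs) = Some \<beta>"
    using act_cf_word_if_executable[OF cs(4,2,1)] by blast
  have w: "walk_word p = cf_word cs" using walk_word_cf_walk[OF cs(1), of "fst (hd p)"] cs(3) by simp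
  have "length (walk_word p) = l" using p unfolding complete_walks_def digraph_walks_def by simp
  then have "cf_word cs \<in> {w \<in> lists Sg. length w = l \<and> act delta (Some (fst (hd p))) w = Some \<beta>}"
    using cf_word_in_lists[OF cs(1)] \<beta> w by simp
  then have "trace_eq I `` {cf_word cs} \<in> trace_classes (fst (hd p)) \<beta> l"
    unfolding trace_classes_def by (rule quotientI)
  then show ?thesis unfolding w using \<beta> cs(4) by blast
qed

lemma complete_walks_eqI:
  assumes p: "p1 \<in> complete_walks l" "p2 \<in> complete_walks l"
    and eq: "fst (hd p1) = fst (hd p2)" "(walk_word p1, walk_word p2) \<in> trace_eq I"
  shows "p1 = p2"
proof -
  obtain cs1 where cs1: "cf_normal cs1" "cf_walk (fst (hd p1)) cs1 = p1"
    using complete_walksD[OF p(1)] by blast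
  obtain cs2 where cs2: "cf_normal cs2" "cf_walk (fst (hd p2)) cs2 = p2"
    using complete_walksD[OF p(2)] by blast
  have "walk_word p1 = cf_word cs1" "walk_word p2 = cf_word cs2"
    using walk_word_cf_walk[OF cs1(1), of "fst (hd p1)"] walk_word_cf_walk[OF cs2(1), of "fst (hd p2)"]
      cs1(2) cs2(2) by simp_all
  then have "cs1 = cs2" using cf_normal_unique[OF cs1(1) cs2(1)] eq(2) by simp
  then have "cf_walk (fst (hd p1)) cs1 = cf_walk (fst (hd p2)) cs2" using eq(1) by simp
  then show "p1 = p2" unfolding cs1(2) cs2(2) .
qed

lemma card_complete_walks_le:
  "card (complete_walks l) \<le> (\<Sum>\<alpha>\<in>X. \<Sum>\<beta>\<in>X. trace_count Sg I delta \<alpha> \<beta> l)"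
proof -
  define g where "g p = (fst (hd p), the (act delta (Some (fst (hd p))) (walk_word p)),
     trace_eq I `` {walk_word p})" for p
  have g: "g p \<in> Sigma X (\<lambda>\<alpha>. Sigma X (\<lambda>\<beta>. trace_classes \<alpha> \<beta> l))" if "p \<in> complete_walks l" for p
    using complete_walk_trace_class[OF that] unfolding g_def by auto
  have inj: "inj_on g (complete_walks l)"
  proof
    fix p1 p2 assume p: "p1 \<in> complete_walks l" "p2 \<in> complete_walks l" "g p1 = g p2"
    then have "trace_eq I `` {walk_word p1} = trace_eq I `` {walk_word p2}" unfolding g_def by simp
    then have "(walk_word p1, walk_word p2) \<in> trace_eq I"
      by (simp add: eq_equiv_class_iff[OF equiv_trace_eq[OF sym_I] UNIV_I UNIV_I])
    moreover have "fst (hd p1) = fst (hd p2)" using p(3) unfolding g_def by simp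
    ultimately show "p1 = p2" using complete_walks_eqI[OF p(1,2)] by blast
  qed
  have "card (complete_walks l) \<le> card (Sigma X (\<lambda>\<alpha>. Sigma X (\<lambda>\<beta>. trace_classes \<alpha> \<beta> l)))"
    using g finite_X finite_trace_classes by (intro card_inj_on_le[OF inj] image_subsetI finite_SigmaI)
  also have "\<dots> = (\<Sum>\<alpha>\<in>X. card (Sigma X (\<lambda>\<beta>. trace_classes \<alpha> \<beta> l)))"
    using finite_X finite_trace_classes by (intro card_SigmaI) auto
  also have "\<dots> = (\<Sum>\<alpha>\<in>X. \<Sum>\<beta>\<in>X. card (trace_classes \<alpha> \<beta> l))"
    using finite_X finite_trace_classes by (intro sum.cong refl card_SigmaI) auto
  finally show ?thesis by (simp add: trace_count_eq_card)
qed

definition block_head :: "'s \<times> 'a set \<times> nat \<Rightarrow> ('s \<times> 'a set \<times> nat) list" where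
  "block_head x = map (\<lambda>t. (fst x, fst (snd x), t)) [1..<snd (snd x)]"

definition block_tail :: "'s \<times> 'a set \<times> nat \<Rightarrow> ('s \<times> 'a set \<times> nat) list" where
  "block_tail x = map (\<lambda>t. (fst x, fst (snd x), t)) [Suc (snd (snd x))..<Suc (card (fst (snd x)))]"

definition complete_walk :: "('s \<times> 'a set \<times> nat) list \<Rightarrow> ('s \<times> 'a set \<times> nat) list" where
  "complete_walk p = block_head (hd p) @ p @ block_tail (last p)"

lemma block_head_walk:
  assumes "x \<in> V"
  shows "set (block_head x) \<subseteq> V" "successively E (block_head x @ [x])"
    "snd (snd (hd (block_head x @ [x]))) = 1" "length (block_head x) \<le> card Sg"
proof -
  obtain \<alpha> c i where x: "x = (\<alpha>, c, i)" by (cases x) auto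
  have c: "(\<alpha>, c) \<in> D" and i: "1 \<le> i" "i \<le> card c" using assms x ADSC_nodes_iff by auto
  have eq: "block_head x @ [x] = map (\<lambda>t. (\<alpha>, c, t)) [1..<Suc i]" using i x by (simp add: block_head_def)
  show "set (block_head x) \<subseteq> V" unfolding block_head_def x using c i by (auto simp: ADSC_nodes_iff)
  show "successively E (block_head x @ [x])" unfolding eq successively_conv_nth
    using ADSC_arc_inner[OF c] i by (auto simp del: upt_Suc)
  show "snd (snd (hd (block_head x @ [x]))) = 1" unfolding eq using i by (simp add: hd_map del: upt_Suc)
  show "length (block_head x) \<le> card Sg" using DSC_nodesD(6)[OF c] i x by (simp add: block_head_def)
qed

lemma block_tail_walk:
  assumes "x \<in> V"
  shows "set (block_tail x) \<subseteq> V" "successively E (x # block_tail x)" "at_block_end (last (x # block_tail x))"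
    "length (block_tail x) \<le> card Sg"
proof -
  obtain \<alpha> c i where x: "x = (\<alpha>, c, i)" by (cases x) auto
  have c: "(\<alpha>, c) \<in> D" and i: "1 \<le> i" "i \<le> card c" using assms x ADSC_nodes_iff by auto
  have eq: "x # block_tail x = map (\<lambda>t. (\<alpha>, c, t)) [i..<Suc (card c)]"
    using i x by (simp add: block_tail_def upt_conv_Cons del: upt_Suc)
  show "set (block_tail x) \<subseteq> V" unfolding block_tail_def x using c i by (auto simp: ADSC_nodes_iff)
  show "successively E (x # block_tail x)" unfolding eq successively_conv_nth
    using ADSC_arc_inner[OF c] i by (auto simp del: upt_Suc)
  show "at_block_end (last (x # block_tail x))" unfolding eq using i by (simp add: last_map del: upt_Suc)
  have "length (block_tail x) = card c - i" by (simp add: block_tail_def x del: upt_Suc)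
  then show "length (block_tail x) \<le> card Sg" using DSC_nodesD(6)[OF c] by linarith
qed

lemma complete_walk_in_complete_walks:
  assumes "p \<in> walks m" "p \<noteq> []"
  shows "complete_walk p \<in> complete_walks (m + length (block_head (hd p)) + length (block_tail (last p)))"
proof -
  have p: "length p = m" "set p \<subseteq> V" "successively E p" using assms(1) unfolding digraph_walks_def by auto
  have hd: "hd p \<in> V" and last: "last p \<in> V" using p(2) assms(2) by auto
  have "successively E (block_head (hd p) @ p)"
    by (rule successively_append_hd[OF assms(2) block_head_walk(2)[OF hd] p(3)])
  then have "successively E ((block_head (hd p) @ p) @ block_tail (last p))"
    using block_tail_walk(2)[OF last] assms(2)
    by (intro successively_append_last[of "block_head (hd p) @ p"]) simp_all
  then have walk: "successively E (complete_walk p)" by (simp add: complete_walk_def)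
  have "hd (complete_walk p) = hd (block_head (hd p) @ [hd p])"
    unfolding complete_walk_def using assms(2) by (cases "block_head (hd p)") auto
  then have "snd (snd (hd (complete_walk p))) = 1" using block_head_walk(3)[OF hd] by simp
  moreover have "last (complete_walk p) = last (last p # block_tail (last p))"
    unfolding complete_walk_def using assms(2) by (cases "block_tail (last p)" rule: rev_cases) auto
  then have "at_block_end (last (complete_walk p))" using block_tail_walk(3)[OF last] by simp
  moreover have "set (complete_walk p) \<subseteq> V"
    unfolding complete_walk_def using block_head_walk(1)[OF hd] block_tail_walk(1)[OF last] p(2) by auto
  moreover have "length (complete_walk p) = m + length (block_head (hd p)) + length (block_tail (last p))"
    unfolding complete_walk_def using p(1) by simp
  moreover have "complete_walk p \<noteq> []" unfolding complete_walk_def using assms(2) by simp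
  ultimately show ?thesis using walk unfolding complete_walks_def digraph_walks_def by blast
qed

text \<open>Completion is injective once the length of the added head is recorded, and it adds at most
  \<^term>\<open>card Sg\<close> nodes at either end.\<close>

lemma card_walks_le_complete_walks:
  assumes "0 < m"
  shows "card (walks m) \<le> (\<Sum>j<2 * (card Sg + 1). (card Sg + 1) * card (complete_walks (m + j)))"
proof -
  define K where "K = card Sg + 1"
  define h where "h p = (length (block_head (hd p)), complete_walk p)" for p
  have ne: "p \<noteq> []" if "p \<in> walks m" for p using that assms unfolding digraph_walks_def by auto
  have "h ` walks m \<subseteq> (\<Union>j<2 * K. {..<K} \<times> complete_walks (m + j))"
  proof
    fix y assume "y \<in> h ` walks m"
    then obtain p where p: "p \<in> walks m" "y = h p" by blast
    have hd: "hd p \<in> V" and last: "last p \<in> V" using p(1) ne[OF p(1)] unfolding digraph_walks_def by auto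
    have "length (block_head (hd p)) < K" "length (block_head (hd p)) + length (block_tail (last p)) < 2 * K"
      using block_head_walk(4)[OF hd] block_tail_walk(4)[OF last] unfolding K_def by simp_all
    moreover have "complete_walk p \<in> complete_walks (m + (length (block_head (hd p)) + length (block_tail (last p))))"
      using complete_walk_in_complete_walks[OF p(1) ne[OF p(1)]] by (simp add: add.assoc)
    ultimately show "y \<in> (\<Union>j<2 * K. {..<K} \<times> complete_walks (m + j))" unfolding p(2) h_def by blast
  qed
  moreover have "inj_on h (walks m)"
  proof
    fix p1 p2 assume "p1 \<in> walks m" "p2 \<in> walks m" "h p1 = h p2"
    moreover have "take m (drop (fst (h p)) (snd (h p))) = p" if "p \<in> walks m" for p
      using that unfolding h_def complete_walk_def digraph_walks_def by simp
    ultimately show "p1 = p2" by metis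
  qed
  moreover have "finite (\<Union>j<2 * K. {..<K} \<times> complete_walks (m + j))"
    using finite_walks unfolding complete_walks_def by auto
  ultimately have "card (walks m) \<le> card (\<Union>j<2 * K. {..<K} \<times> complete_walks (m + j))"
    by (intro card_inj_on_le)
  also have "\<dots> \<le> (\<Sum>j<2 * K. card ({..<K} \<times> complete_walks (m + j)))" by (rule card_UN_le) simp
  also have "\<dots> = (\<Sum>j<2 * K. K * card (complete_walks (m + j)))" by (simp add: card_cartesian_product)
  finally show ?thesis unfolding K_def .
qed

lemma card_walks_le_trace_counts:
  assumes "0 < m"
  shows "real (card (walks m)) \<le> real (card Sg + 1) *
    (\<Sum>j<2 * (card Sg + 1). \<Sum>\<alpha>\<in>X. \<Sum>\<beta>\<in>X. real (trace_count Sg I delta \<alpha> \<beta> (m + j)))"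
proof -
  define K where "K = card Sg + 1"
  have "real (card (walks m)) \<le> real (\<Sum>j<2 * K. K * card (complete_walks (m + j)))"
    using card_walks_le_complete_walks[OF assms] unfolding K_def by (simp only: of_nat_le_iff)
  also have "\<dots> = (\<Sum>j<2 * K. real K * real (card (complete_walks (m + j))))"
    by (simp only: of_nat_sum of_nat_mult)
  also have "\<dots> \<le> (\<Sum>j<2 * K. real K * (\<Sum>\<alpha>\<in>X. \<Sum>\<beta>\<in>X. real (trace_count Sg I delta \<alpha> \<beta> (m + j))))"
    using card_complete_walks_le by (intro sum_mono mult_left_mono) (simp_all flip: of_nat_sum)
  finally show ?thesis unfolding K_def by (simp only: sum_distrib_left)
qed

theorem characteristic_root_eq_conv_radius_walks:
  "characteristic_root Sg I X delta = conv_radius (\<lambda>n. real (card (walks n)))"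
proof (rule antisym)
  define T where "T n = (\<Sum>\<alpha>\<in>X. \<Sum>\<beta>\<in>X. real (trace_count Sg I delta \<alpha> \<beta> n))" for n
  have "characteristic_root Sg I X delta \<le>
      (INF \<alpha>\<in>X. conv_radius (\<lambda>n. \<Sum>\<beta>\<in>X. real (trace_count Sg I delta \<alpha> \<beta> n)))"
    unfolding characteristic_root_def
    by (rule INF_superset_mono[OF order_refl]) (rule conv_radius_sum_ge[OF finite_X])
  also have "\<dots> \<le> conv_radius T" unfolding T_def by (rule conv_radius_sum_ge[OF finite_X])
  also have "\<dots> \<le> conv_radius (\<lambda>n. real (card (walks n)))"
  proof (rule conv_radius_le_of_le_shifts)
    fix m :: nat assume "0 < m"
    then show "norm (real (card (walks m))) \<le> real (card Sg + 1) * (\<Sum>j<2 * (card Sg + 1). norm (T (m + j)))"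
      using card_walks_le_trace_counts by (simp add: T_def sum_nonneg)
  qed
  finally show "characteristic_root Sg I X delta \<le> conv_radius (\<lambda>n. real (card (walks n)))" .
  show "conv_radius (\<lambda>n. real (card (walks n))) \<le> characteristic_root Sg I X delta"
    unfolding characteristic_root_def
    by (intro INF_greatest conv_radius_le_of_norm_le) (simp add: trace_count_le_card_walks)
qed

end

theorem proposition5:
  fixes Sg :: "'a set" and I :: "('a \<times> 'a) set" and X :: "'s set"
    and delta :: "'s option \<Rightarrow> 'a \<Rightarrow> 's option"
  assumes "concurrent_system Sg I X delta"
  defines "r \<equiv> characteristic_root Sg I X delta"
    and "\<rho> \<equiv> digraph_spectral_radius (ADSC_nodes Sg I X delta) (ADSC_arc Sg I X delta)"
  shows "(\<rho> \<noteq> 0 \<longrightarrow> r = ereal (1 / \<rho>)) \<and> (\<rho> = 0 \<longrightarrow> r = \<infinity>)"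
proof -
  interpret concurrent_sys Sg I X delta by (rule concurrent_sys.intro) (rule assms)
  have "r = conv_radius (\<lambda>n. real (card (walks n)))"
    unfolding r_def by (rule characteristic_root_eq_conv_radius_walks)
  also have "\<dots> = (if \<rho> = 0 then \<infinity> else ereal (1 / \<rho>))"
    unfolding \<rho>_def by (rule conv_radius_digraph_walks[OF finite_ADSC_nodes])
  finally show ?thesis by simp
qed

end
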